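(* Let $G\subset\mathbb{R}^2$ be an open set with $0\in G$, let $c>0$, and let $F:G\to\mathbb{R}^2$ be a locally DC mapping such that $F(0)=0$ and $F'_+(0,(1,0))=(c,0)$. Let $S\subset G$ be an (s)-set. Then there exist $a>0$ and $b>0$ such that $$S^*\coloneqq F\big(S\cap((-\infty,a]\times\mathbb{R})\big)\cap((-\infty,b]\times\mathbb{R})$$ is an (s)-set.
   Context: A function on an open convex set is DC if it is the difference of two convex functions; a mapping is DC if all its components are DC; a mapping on an open set $G$ is locally DC if each point of $G$ has a convex open neighbourhood on which it is DC. $F'_+(x,v)=\lim_{t\to0+}(F(x+tv)-F(x))/t$ is the one-sided directional derivative. A function defined on a nonempty set $D\subset\mathbb{R}$ is DCR if it is the restriction of a DC function defined on $\mathbb{R}$. A nonempty closed set $S\subset\mathbb{R}^2$ is an (s)-set if there exists $r>0$ such that (a) $S\subset\bigcup_{i=1}^k\operatorname{graph} f_i$ for some DCR functions $f_i:[0,r]\to\mathbb{R}$ with $f_i(0)=(f_i)'_+(0)=0$, and (b) $S=\bigcup_{h\in H}\operatorname{graph} h$ for some family $H$ of continuous functions on $[0,r]$. *)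

theory Defs
  imports "HOL-Analysis.Analysis"
begin

definition DC_on :: "'a::real_vector set \<Rightarrow> ('a \<Rightarrow> real) \<Rightarrow> bool" where
  "DC_on U f \<longleftrightarrow> (\<exists>g h. convex_on U g \<and> convex_on U h \<and> (\<forall>x\<in>U. f x = g x - h x))"

definition DC_map_on :: "(real \<times> real) set \<Rightarrow> (real \<times> real \<Rightarrow> real \<times> real) \<Rightarrow> bool" where
  "DC_map_on U F \<longleftrightarrow> DC_on U (\<lambda>x. fst (F x)) \<and> DC_on U (\<lambda>x. snd (F x))"

definition locally_DC_map :: "(real \<times> real) set \<Rightarrow> (real \<times> real \<Rightarrow> real \<times> real) \<Rightarrow> bool" where
  "locally_DC_map G F \<longleftrightarrow>
     (\<forall>x\<in>G. \<exists>U. open U \<and> convex U \<and> x \<in> U \<and> U \<subseteq> G \<and> DC_map_on U F)"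

definition has_onesided_dirderiv :: "('a::real_normed_vector \<Rightarrow> 'b::real_normed_vector) \<Rightarrow> 'a \<Rightarrow> 'a \<Rightarrow> 'b \<Rightarrow> bool" where
  "has_onesided_dirderiv F x v D \<longleftrightarrow>
     ((\<lambda>t. (F (x + t *\<^sub>R v) - F x) /\<^sub>R t) \<longlongrightarrow> D) (at_right 0)"

definition DCR_on :: "real set \<Rightarrow> (real \<Rightarrow> real) \<Rightarrow> bool" where
  "DCR_on D f \<longleftrightarrow> D \<noteq> {} \<and> (\<exists>g. DC_on UNIV g \<and> (\<forall>x\<in>D. f x = g x))"

definition graph_on :: "real set \<Rightarrow> (real \<Rightarrow> real) \<Rightarrow> (real \<times> real) set" where
  "graph_on D f = {(x, f x) | x. x \<in> D}"

definition s_set :: "(real \<times> real) set \<Rightarrow> bool" where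
  "s_set S \<longleftrightarrow> S \<noteq> {} \<and> closed S \<and>
     (\<exists>r>0.
        (\<exists>Fs. finite Fs \<and>
           (\<forall>f\<in>Fs. DCR_on {0..r} f \<and> f 0 = 0 \<and>
                    has_onesided_dirderiv f 0 1 0) \<and>
           S \<subseteq> (\<Union>f\<in>Fs. graph_on {0..r} f)) \<and>
        (\<exists>H. (\<forall>h\<in>H. continuous_on {0..r} h) \<and>
           S = (\<Union>h\<in>H. graph_on {0..r} h)))"

end

(* Near the origin F = (u1 - v1, u2 - v2) with u1, v1, u2, v2 convex and Lipschitz in the
   second variable.  Along a DC curve t -> (t, g t) with g 0 = 0 and g'(0+) = 0 both components
   G1, G2 of F are DC, with G1 t / t -> c and G2 t / t -> 0.  On a short interval [0, delta] the
   slopes of the convex parts of G1 and G2 are almost constant; hence G1 is expanding and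
   G2 o G1^-1 is an explicit difference of convex Lipschitz functions, i.e. F maps the graph of
   each DCR curve of the (s)-set onto the graph of a DCR function.  A continuous curve of the
   (s)-set agrees, locally to the right, with one of the finitely many DCR curves, so the first
   coordinate of F is expanding along it as well and its image is again a continuous graph. *)

theory Submission
  imports Defs
begin

section \<open>Slopes of real functions\<close>

definition slope :: "(real \<Rightarrow> real) \<Rightarrow> real \<Rightarrow> real \<Rightarrow> real" where
  "slope f s t = (f t - f s) / (t - s)"

lemma slope_mult: "s \<noteq> t \<Longrightarrow> f t - f s = (t - s) * slope f s t"
  by (simp add: slope_def)

lemma slope_ge_iff: "s < t \<Longrightarrow> m \<le> slope f s t \<longleftrightarrow> m * (t - s) \<le> f t - f s"
  by (simp add: slope_def le_divide_eq)

lemma slope_add: "slope (\<lambda>t. f t + g t) s t = slope f s t + slope g s t"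
  by (simp add: slope_def add_divide_distrib[symmetric] algebra_simps)

lemma slope_diff: "slope (\<lambda>t. f t - g t) s t = slope f s t - slope g s t"
  by (simp add: slope_def diff_divide_distrib[symmetric] algebra_simps)

lemma slope_cmult: "slope (\<lambda>t. a * f t) s t = a * slope f s t"
  by (simp add: slope_def right_diff_distrib)

lemma slope_ident: "s \<noteq> t \<Longrightarrow> slope (\<lambda>t. t) s t = 1"
  by (simp add: slope_def)

lemma slope_compose:
  assumes "G (\<psi> x) = x" "G (\<psi> y) = y" "\<psi> x \<noteq> \<psi> y"
  shows "slope (f \<circ> \<psi>) x y = slope f (\<psi> x) (\<psi> y) / slope G (\<psi> x) (\<psi> y)"
  using assms by (auto simp: slope_def divide_simps)

lemma convex_on_slope_mono:
  fixes f :: "real \<Rightarrow> real"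
  assumes "convex_on I f" "s \<in> I" "u \<in> I" "s < t" "t < u"
  shows "slope f s t \<le> slope f s u" "slope f s u \<le> slope f t u" "slope f s t \<le> slope f t u"
proof -
  have swap: "slope f x y = (f x - f y) / (x - y)" for x y
    unfolding slope_def by (metis minus_diff_eq minus_divide_divide)
  show "slope f s t \<le> slope f s u" "slope f s u \<le> slope f t u"
    using convex_on_slope_le[OF assms] by (simp_all add: swap)
  then show "slope f s t \<le> slope f t u" by linarith
qed

lemma convex_on_if_slope_mono:
  fixes f :: "real \<Rightarrow> real"
  assumes "convex I"
    and mono: "\<And>s t u. s \<in> I \<Longrightarrow> u \<in> I \<Longrightarrow> s < t \<Longrightarrow> t < u \<Longrightarrow> slope f s t \<le> slope f t u"
  shows "convex_on I f"
proof (rule convex_on_linorderI[OF _ \<open>convex I\<close>])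
  fix \<mu> x y :: real assume \<mu>: "0 < \<mu>" "\<mu> < 1" and xy: "x \<in> I" "y \<in> I" "x < y"
  define z where "z = (1 - \<mu>) *\<^sub>R x + \<mu> *\<^sub>R y"
  have dz: "z - x = \<mu> * (y - x)" "y - z = (1 - \<mu>) * (y - x)"
    unfolding z_def by (simp_all add: algebra_simps)
  then have "x < z" "z < y" using \<mu> xy by (metis diff_gt_0_iff_gt mult_pos_pos)+
  from mono[OF xy(1,2) this] have "(f z - f x) / (\<mu> * (y - x)) \<le> (f y - f z) / ((1 - \<mu>) * (y - x))"
    by (simp only: slope_def dz)
  then have "(1 - \<mu>) * (f z - f x) \<le> \<mu> * (f y - f z)"
    using \<mu> xy by (simp add: divide_simps mult.commute mult.left_commute)
  then show "f z \<le> (1 - \<mu>) * f x + \<mu> * f y" by (simp add: algebra_simps)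
qed

lemma lipschitz_on_if_slope_bounded:
  fixes f :: "real \<Rightarrow> real"
  assumes bound: "\<And>s t. s \<in> I \<Longrightarrow> t \<in> I \<Longrightarrow> s < t \<Longrightarrow> \<bar>slope f s t\<bar> \<le> K" and "0 \<le> K"
  shows "K-lipschitz_on I f"
proof (rule lipschitz_on_leI[OF _ \<open>0 \<le> K\<close>])
  fix s t assume st: "s \<in> I" "t \<in> I" "s \<le> t"
  show "dist (f s) (f t) \<le> K * dist s t"
  proof (cases "s = t")
    case False
    have "dist (f s) (f t) = \<bar>f t - f s\<bar>" by (simp add: dist_real_def abs_minus_commute)
    also have "\<dots> = (t - s) * \<bar>slope f s t\<bar>"
      using st False slope_mult[of s t f] by (simp add: abs_mult)
    also have "\<dots> \<le> (t - s) * K"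
      using bound[OF st(1,2)] st False by (simp add: mult_left_mono)
    finally show ?thesis using st by (simp add: dist_real_def mult.commute)
  qed simp
qed

lemma convex_on_bounded_imp_lipschitz_on:
  fixes f :: "real \<Rightarrow> real"
  assumes f: "convex_on {a - \<rho>..b + \<rho>} f" and "0 < \<rho>" "a \<le> b"
    and bound: "\<And>x. x \<in> {a - \<rho>..b + \<rho>} \<Longrightarrow> \<bar>f x\<bar> \<le> M"
  shows "(2 * M / \<rho>)-lipschitz_on {a..b} f"
proof (rule lipschitz_on_if_slope_bounded)
  show "0 \<le> 2 * M / \<rho>"
    using bound[of a] \<open>0 < \<rho>\<close> \<open>a \<le> b\<close> by simp
  fix s t assume st: "s \<in> {a..b}" "t \<in> {a..b}" "s < t"
  have "slope f (s - \<rho>) s \<le> slope f s t" "slope f s t \<le> slope f t (t + \<rho>)"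
    using convex_on_slope_mono(3)[OF f, where s = "s - \<rho>" and t = s and u = t]
      convex_on_slope_mono(3)[OF f, where s = s and t = t and u = "t + \<rho>"] st \<open>0 < \<rho>\<close>
    by auto
  moreover have "- (2 * M / \<rho>) \<le> slope f (s - \<rho>) s" "slope f t (t + \<rho>) \<le> 2 * M / \<rho>"
    using bound[of s] bound[of "s - \<rho>"] bound[of t] bound[of "t + \<rho>"] st \<open>0 < \<rho>\<close>
    by (auto simp: slope_def divide_simps abs_le_iff)
  ultimately show "\<bar>slope f s t\<bar> \<le> 2 * M / \<rho>" by linarith
qed

text \<open>The extension adds to the value at the nearest point of the interval \<open>K\<close> times the
  distance to it; the Lipschitz bound is what keeps this convex across the endpoints.\<close>
lemma convex_on_lipschitz_extend:
  fixes f :: "real \<Rightarrow> real"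
  assumes "a \<le> b" and f: "convex_on {a..b} f" and lip: "K-lipschitz_on {a..b} f"
  obtains g where "convex_on UNIV g" "\<And>x. x \<in> {a..b} \<Longrightarrow> g x = f x"
proof
  define cl where "cl x = max a (min b x)" for x :: real
  define g where "g x = f (cl x) + K * \<bar>x - cl x\<bar>" for x
  have cl: "cl x \<in> {a..b}" for x using \<open>a \<le> b\<close> unfolding cl_def by auto
  have K: "0 \<le> K" using lipschitz_on_nonneg[OF lip] .
  have g_le: "g x \<le> f y + K * \<bar>x - y\<bar>" if y: "y \<in> {a..b}" for x y
  proof -
    have d: "\<bar>cl x - y\<bar> + \<bar>x - cl x\<bar> = \<bar>x - y\<bar>" using y \<open>a \<le> b\<close> unfolding cl_def by auto
    have "f (cl x) \<le> f y + K * \<bar>cl x - y\<bar>"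
      using lipschitz_onD[OF lip cl[of x] y] by (simp add: dist_real_def)
    then show ?thesis unfolding g_def using d by (simp add: algebra_simps flip: d)
  qed
  show "convex_on UNIV g"
  proof (rule convex_onI)
    fix \<mu> x y :: real assume \<mu>: "0 < \<mu>" "\<mu> < 1"
    define z where "z = (1 - \<mu>) * cl x + \<mu> * cl y"
    have z: "z \<in> {a..b}"
      using convexD[OF convex_real_interval(5) cl[of x] cl[of y], of "1 - \<mu>" \<mu>] \<mu>
      unfolding z_def by simp
    have fz: "f z \<le> (1 - \<mu>) * f (cl x) + \<mu> * f (cl y)"
      using convex_onD[OF f, of \<mu> "cl x" "cl y"] cl \<mu> unfolding z_def by simp
    have "\<bar>((1 - \<mu>) * x + \<mu> * y) - z\<bar> = \<bar>(1 - \<mu>) * (x - cl x) + \<mu> * (y - cl y)\<bar>"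
      unfolding z_def by (simp add: algebra_simps)
    also have "\<dots> \<le> (1 - \<mu>) * \<bar>x - cl x\<bar> + \<mu> * \<bar>y - cl y\<bar>"
      using abs_triangle_ineq[of "(1 - \<mu>) * (x - cl x)" "\<mu> * (y - cl y)"] \<mu> by (simp add: abs_mult)
    finally have "K * \<bar>((1 - \<mu>) * x + \<mu> * y) - z\<bar> \<le> K * ((1 - \<mu>) * \<bar>x - cl x\<bar> + \<mu> * \<bar>y - cl y\<bar>)"
      using K by (rule mult_left_mono)
    then have "g ((1 - \<mu>) * x + \<mu> * y) \<le> (1 - \<mu>) * g x + \<mu> * g y"
      using g_le[OF z, of "(1 - \<mu>) * x + \<mu> * y"] fz unfolding g_def by (simp add: algebra_simps)
    then show "g ((1 - \<mu>) *\<^sub>R x + \<mu> *\<^sub>R y) \<le> (1 - \<mu>) * g x + \<mu> * g y" by simp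
  qed simp
  show "g x = f x" if "x \<in> {a..b}" for x
    using that unfolding g_def cl_def by auto
qed

lemma DCR_on_diff_convex_lipschitz:
  assumes "a \<le> b" "convex_on {a..b} P" "convex_on {a..b} Q"
    and "K-lipschitz_on {a..b} P" "K'-lipschitz_on {a..b} Q"
    and "\<And>x. x \<in> {a..b} \<Longrightarrow> \<phi> x = P x - Q x"
  shows "DCR_on {a..b} \<phi>"
proof -
  obtain P' Q' where "convex_on UNIV P'" "\<And>x. x \<in> {a..b} \<Longrightarrow> P' x = P x"
    and "convex_on UNIV Q'" "\<And>x. x \<in> {a..b} \<Longrightarrow> Q' x = Q x"
    using convex_on_lipschitz_extend assms(1-5) by metis
  then have "DC_on UNIV (\<lambda>x. P' x - Q' x)" "\<forall>x\<in>{a..b}. \<phi> x = P' x - Q' x"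
    using assms(6) unfolding DC_on_def by auto
  then show ?thesis unfolding DCR_on_def using \<open>a \<le> b\<close> by auto
qed

text \<open>The constant \<open>l\<close> is the right derivative of \<open>f\<close> at \<open>0\<close>.\<close>
lemma convex_on_slopes_pinch:
  fixes f :: "real \<Rightarrow> real"
  assumes f: "convex_on {-\<eta>..\<eta>} f" and "0 < \<eta>" "0 < \<epsilon>"
  obtains l where "\<forall>\<^sub>F \<delta> in at_right 0. \<forall>s t. 0 \<le> s \<longrightarrow> s < t \<longrightarrow> t \<le> \<delta> \<longrightarrow>
                      l \<le> slope f s t \<and> slope f s t \<le> l + \<epsilon>"
proof
  define l where "l = Inf ((\<lambda>s. slope f 0 s) ` {0<..\<eta>})"
  have bdd: "bdd_below ((\<lambda>s. slope f 0 s) ` {0<..\<eta>})"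
    using convex_on_slope_mono(3)[OF f, where s = "-\<eta>" and t = 0] \<open>0 < \<eta>\<close>
    by (intro bdd_belowI2[of _ "slope f (-\<eta>) 0"]) auto
  have l_le: "l \<le> slope f 0 s" if "s \<in> {0<..\<eta>}" for s
    unfolding l_def using that bdd by (simp add: cInf_lower)
  have "l < l + \<epsilon> / 2" using \<open>0 < \<epsilon>\<close> by simp
  then obtain s0 where s0: "s0 \<in> {0<..\<eta>}" "slope f 0 s0 < l + \<epsilon> / 2"
    unfolding l_def using \<open>0 < \<eta>\<close> bdd by (subst (asm) cInf_less_iff) auto
  have pinch: "l \<le> slope f s t \<and> slope f s t \<le> l + \<epsilon>" if st: "0 \<le> s" "s < t" "t < s0 / 2" for s t
  proof
    have t: "t \<in> {0<..\<eta>}" using st s0 by auto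
    show "l \<le> slope f s t"
      using l_le[OF t] convex_on_slope_mono(2)[OF f, where s = 0 and t = s and u = t] st t
      by (cases "s = 0") auto
    have "s * l \<le> f s - f 0"
      using l_le[of s] slope_mult[of 0 s f] st s0 by (cases "s = 0") (auto simp: mult_left_mono)
    moreover have "f s0 - f 0 \<le> s0 * (l + \<epsilon> / 2)"
      using slope_mult[of 0 s0 f] s0 mult_left_mono[of "slope f 0 s0" "l + \<epsilon> / 2" s0] by auto
    moreover have "s * \<epsilon> \<le> s0 / 2 * \<epsilon>" using st \<open>0 < \<epsilon>\<close> by (simp add: mult_right_mono)
    ultimately have "(s0 - s) * slope f s s0 \<le> (s0 - s) * (l + \<epsilon>)"
      using slope_mult[of s s0 f] st by (simp add: algebra_simps)
    then have "slope f s s0 \<le> l + \<epsilon>" using st by simp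
    moreover have "slope f s t \<le> slope f s s0"
      using convex_on_slope_mono(1)[OF f, where s = s and t = t and u = s0] st s0 by auto
    ultimately show "slope f s t \<le> l + \<epsilon>" by simp
  qed
  show "\<forall>\<^sub>F \<delta> in at_right 0. \<forall>s t. 0 \<le> s \<longrightarrow> s < t \<longrightarrow> t \<le> \<delta> \<longrightarrow> l \<le> slope f s t \<and> slope f s t \<le> l + \<epsilon>"
    unfolding eventually_at_right_field using s0 pinch by (intro exI[of _ "s0 / 2"]) auto
qed

lemma mono_on_if_eventually_right_mono:
  fixes f :: "real \<Rightarrow> real"
  assumes cont: "continuous_on {a..b} f"
    and right: "\<And>x. x \<in> {a..<b} \<Longrightarrow> \<forall>\<^sub>F y in at_right x. f x \<le> f y"
  shows "mono_on {a..b} f"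
proof (rule mono_onI)
  fix s t assume st: "s \<in> {a..b}" "t \<in> {a..b}" "s \<le> t"
  define A where "A = {x \<in> {s..t}. f s \<le> f x}"
  have "closed A"
    unfolding A_def using continuous_on_subset[OF cont] st
    by (intro continuous_on_closed_Collect_le continuous_on_const) auto
  moreover have "s \<in> A" "bdd_above A" using st unfolding A_def by auto
  ultimately have sup: "Sup A \<in> A" "\<And>x. x \<in> A \<Longrightarrow> x \<le> Sup A"
    by (auto intro: closed_contains_Sup cSup_upper)
  have "Sup A = t"
  proof (rule ccontr)
    assume "Sup A \<noteq> t"
    then have lt: "Sup A < t" using sup(1) unfolding A_def by auto
    then have "\<forall>\<^sub>F y in at_right (Sup A). f (Sup A) \<le> f y \<and> Sup A < y \<and> y < t"
      using right[of "Sup A"] sup(1) st unfolding A_def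
      by (intro eventually_conj eventually_at_right_less) (auto simp: eventually_at_right_field)
    then obtain y where "f (Sup A) \<le> f y" "Sup A < y" "y < t"
      using eventually_happens' trivial_limit_at_right_real by blast
    then have "y \<in> A" using sup(1) unfolding A_def by auto
    with \<open>Sup A < y\<close> sup(2) show False by force
  qed
  then show "f s \<le> f t" using sup(1) unfolding A_def by auto
qed

lemma convex_on_eq:
  assumes "convex_on S f" "\<And>x. x \<in> S \<Longrightarrow> f x = g x"
  shows "convex_on S g"
  using assms unfolding convex_on_def by (metis (no_types, lifting) convexD)

text \<open>In the next three lemmas \<open>a\<close>, \<open>w\<close>, \<open>b\<close> are the slopes of an expanding function,
  of a convex majorant minus its smallest slope, and of a second function on one interval, and
  the primed letters the same slopes on the adjacent interval to the right.\<close>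
lemma quotient_increment_bound:
  fixes a a' b b' w w' m M :: real
  assumes "0 < m" "m \<le> a" "m \<le> a'" "0 \<le> w" "w \<le> m / 2" "\<bar>b\<bar> \<le> M"
    and da: "\<bar>a' - a\<bar> \<le> w' - w" and db: "\<bar>b' - b\<bar> \<le> w' - w"
  shows "\<bar>b' / a' - b / a\<bar> \<le> (2 + 2 * M / m) * w' / a' - (2 + 2 * M / m) * w / a"
proof -
  define C where "C = 2 + 2 * M / m"
  define D where "D = w' - w"
  have pos: "0 < a" "0 < a'" "0 \<le> D" "0 \<le> M" using assms unfolding D_def by linarith+
  have "w * (a - a') \<ge> - (w * D)"
    using mult_left_mono[of "- D" "a - a'" w] da assms(4) unfolding D_def by linarith
  moreover have "w * D \<le> D * a / 2"
    using mult_left_mono[of "2 * w" a D] assms pos by (simp add: algebra_simps)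
  moreover have "w' * a - w * a' = D * a + w * (a - a')" unfolding D_def by (simp add: algebra_simps)
  ultimately have den: "D * a / 2 \<le> w' * a - w * a'" by linarith
  have "b' * a - b * a' = (b' - b) * a + b * (a - a')" by (simp add: algebra_simps)
  then have "\<bar>b' * a - b * a'\<bar> \<le> \<bar>b' - b\<bar> * a + \<bar>b\<bar> * \<bar>a - a'\<bar>"
    using abs_triangle_ineq[of "(b' - b) * a" "b * (a - a')"] pos by (simp add: abs_mult)
  also have "\<dots> \<le> D * a + M * D"
    using db da pos assms(6) unfolding D_def
    by (intro add_mono mult_right_mono mult_mono) (auto simp: abs_minus_commute)
  also have "\<dots> \<le> C * (D * a / 2)"
  proof -
    have "1 \<le> a / m" using assms(1,2) by simp
    then have "M * D \<le> M * D * (a / m)"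
      using mult_left_mono[of 1 "a / m" "M * D"] pos by simp
    then show ?thesis unfolding C_def using assms(1) by (simp add: field_simps)
  qed
  also have "\<dots> \<le> C * (w' * a - w * a')"
    using den pos assms(1) unfolding C_def by (intro mult_left_mono) auto
  finally have num: "\<bar>b' * a - b * a'\<bar> \<le> C * (w' * a - w * a')" .
  have "b' / a' - b / a = (b' * a - b * a') / (a * a')"
    and "C * w' / a' - C * w / a = C * (w' * a - w * a') / (a * a')"
    using pos by (simp_all add: field_simps)
  then show ?thesis
    unfolding C_def[symmetric] using num pos by (simp add: abs_div divide_right_mono)
qed

lemma quotient_mono:
  fixes a a' b b' w w' m M \<sigma> :: real
  assumes "0 < m" "m \<le> a" "m \<le> a'" "0 \<le> w" "w \<le> m / 2" "\<bar>b\<bar> \<le> M" "\<bar>\<sigma>\<bar> = 1"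
    and "\<bar>a' - a\<bar> \<le> w' - w" "\<bar>b' - b\<bar> \<le> w' - w"
  shows "((2 + 2 * M / m) * w + \<sigma> * b) / (2 * a) \<le> ((2 + 2 * M / m) * w' + \<sigma> * b') / (2 * a')"
proof -
  define C where "C = 2 + 2 * M / m"
  have "\<sigma> * (b / a - b' / a') \<le> C * w' / a' - C * w / a"
    using quotient_increment_bound[OF assms(1-6,8,9)] \<open>\<bar>\<sigma>\<bar> = 1\<close> unfolding C_def[symmetric]
    by (metis abs_ge_self abs_minus_commute abs_mult mult_1 order_trans)
  then have ineq: "\<sigma> * b / a - \<sigma> * b' / a' \<le> C * w' / a' - C * w / a"
    by (simp add: right_diff_distrib)
  have "a \<noteq> 0" "a' \<noteq> 0" using assms by linarith+
  then have eq: "(C * w + \<sigma> * b) / (2 * a) = (C * w / a + \<sigma> * b / a) / 2"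
    "(C * w' + \<sigma> * b') / (2 * a') = (C * w' / a' + \<sigma> * b' / a') / 2"
    by (simp_all add: field_simps)
  have "q - r \<le> s - p \<Longrightarrow> (p + q) / 2 \<le> (s + r) / 2" for p q r s :: real
    by simp
  from this[OF ineq] show ?thesis unfolding C_def[symmetric] eq .
qed

lemma quotient_bound:
  fixes a b w m M \<sigma> :: real
  assumes "0 < m" "m \<le> a" "0 \<le> w" "w \<le> m / 2" "\<bar>b\<bar> \<le> M" "\<bar>\<sigma>\<bar> = 1"
  shows "\<bar>((2 + 2 * M / m) * w + \<sigma> * b) / (2 * a)\<bar> \<le> (2 + 2 * M / m) + M / m"
proof -
  define C where "C = 2 + 2 * M / m"
  have C: "0 \<le> C" and "0 \<le> M" using assms unfolding C_def by (auto intro: order_trans)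
  have "\<bar>C * w + \<sigma> * b\<bar> \<le> \<bar>C * w\<bar> + \<bar>\<sigma> * b\<bar>" by (rule abs_triangle_ineq)
  also have "\<dots> \<le> C * m + M"
    using mult_left_mono[of w m C] C assms by (simp add: abs_mult)
  also have "\<dots> = (C + M / m) * m" using assms(1) by (simp add: field_simps)
  also have "\<dots> \<le> (C + M / m) * (2 * a)"
    using assms(1,2) C \<open>0 \<le> M\<close> by (intro mult_left_mono) auto
  finally show ?thesis
    using assms(1,2) unfolding C_def[symmetric] by (simp add: abs_div divide_le_eq)
qed

section \<open>Expanding functions and their inverses\<close>

locale expanding_from_0 =
  fixes m \<delta> :: real and G :: "real \<Rightarrow> real"
  assumes rate_pos: "0 < m"
    and continuous: "continuous_on {0..\<delta>} G"
    and zero: "G 0 = 0"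
    and slope_ge: "\<And>s t. 0 \<le> s \<Longrightarrow> s < t \<Longrightarrow> t \<le> \<delta> \<Longrightarrow> m \<le> slope G s t"
begin

abbreviation Ginv :: "real \<Rightarrow> real" where
  "Ginv \<equiv> the_inv_into {0..\<delta>} G"

lemma increment_ge: "0 \<le> s \<Longrightarrow> s \<le> t \<Longrightarrow> t \<le> \<delta> \<Longrightarrow> m * (t - s) \<le> G t - G s"
  using slope_ge[of s t] slope_ge_iff[of s t m G] by (cases "s = t") auto

lemma ge_rate: "t \<in> {0..\<delta>} \<Longrightarrow> m * t \<le> G t"
  using increment_ge[of 0 t] zero by simp

lemma strict_mono: "strict_mono_on {0..\<delta>} G"
proof (rule strict_mono_onI)
  fix s t assume "s \<in> {0..\<delta>}" "t \<in> {0..\<delta>}" "s < t"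
  then have "m * (t - s) \<le> G t - G s" "0 < m * (t - s)" using increment_ge rate_pos by auto
  then show "G s < G t" by linarith
qed

lemma inj: "inj_on G {0..\<delta>}"
  using strict_mono by (rule strict_mono_on_imp_inj_on)

lemma Icc_subset_image: "{0..m * \<delta>} \<subseteq> G ` {0..\<delta>}"
proof
  fix x assume x: "x \<in> {0..m * \<delta>}"
  then have "0 \<le> m * \<delta>" by simp
  then have "0 \<le> \<delta>" using rate_pos by (simp add: zero_le_mult_iff)
  moreover have "G 0 \<le> x" "x \<le> G \<delta>" using x ge_rate[of \<delta>] zero \<open>0 \<le> \<delta>\<close> by auto
  ultimately obtain t where "t \<in> {0..\<delta>}" "G t = x"
    using IVT'[of G 0 x \<delta>] continuous by auto
  then show "x \<in> G ` {0..\<delta>}" by blast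
qed

lemma Ginv_mem: "x \<in> {0..m * \<delta>} \<Longrightarrow> Ginv x \<in> {0..\<delta>}"
  using Icc_subset_image inj by (blast intro: the_inv_into_into)

lemma G_Ginv: "x \<in> {0..m * \<delta>} \<Longrightarrow> G (Ginv x) = x"
  using Icc_subset_image inj by (blast intro: f_the_inv_into_f)

lemma Ginv_G: "t \<in> {0..\<delta>} \<Longrightarrow> Ginv (G t) = t"
  using inj by (rule the_inv_into_f_f)

lemma Ginv_zero: "0 \<le> \<delta> \<Longrightarrow> Ginv 0 = 0"
  using Ginv_G[of 0] zero by simp

lemma Ginv_le: "x \<in> {0..m * \<delta>} \<Longrightarrow> m * Ginv x \<le> x"
  using ge_rate[OF Ginv_mem, of x] G_Ginv[of x] by simp

lemma Ginv_strict_mono: "strict_mono_on {0..m * \<delta>} Ginv"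
proof (rule strict_mono_onI)
  fix x y assume xy: "x \<in> {0..m * \<delta>}" "y \<in> {0..m * \<delta>}" "x < y"
  then have "G (Ginv x) < G (Ginv y)" by (simp add: G_Ginv)
  then show "Ginv x < Ginv y"
    using strict_mono_on_less[OF strict_mono Ginv_mem[OF xy(1)] Ginv_mem[OF xy(2)]] by simp
qed

lemma Ginv_continuous: "continuous_on {0..m * \<delta>} Ginv"
  using continuous_on_inv_into[OF continuous compact_Icc inj] Icc_subset_image
  by (rule continuous_on_subset)

lemma onesided_dirderiv_compose_Ginv:
  fixes H :: "real \<Rightarrow> real"
  assumes "0 < \<delta>" "H 0 = 0" and H_lim: "((\<lambda>t. H t / t) \<longlongrightarrow> 0) (at_right 0)"
  shows "has_onesided_dirderiv (H \<circ> Ginv) 0 1 0"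
proof -
  have near: "\<forall>\<^sub>F x in at_right 0. x \<in> {0<..m * \<delta>}"
    unfolding eventually_at_right_field
    using rate_pos \<open>0 < \<delta>\<close> by (intro exI[of _ "m * \<delta>"]) auto
  have pos: "0 < Ginv x" "m * Ginv x \<le> x" if "x \<in> {0<..m * \<delta>}" for x
  proof -
    from that have "x \<in> {0..m * \<delta>}" by simp
    then show "m * Ginv x \<le> x" by (rule Ginv_le)
    have "Ginv x \<noteq> 0" using G_Ginv[OF \<open>x \<in> {0..m * \<delta>}\<close>] zero that by force
    then show "0 < Ginv x" using Ginv_mem[OF \<open>x \<in> {0..m * \<delta>}\<close>] by simp
  qed
  have Ginv_pos: "\<forall>\<^sub>F x in at_right 0. 0 < Ginv x"
    using near by (rule eventually_mono) (rule pos(1))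
  have Ginv_bound: "\<forall>\<^sub>F x in at_right 0. m * Ginv x \<le> x"
    using near by (rule eventually_mono) (rule pos(2))
  have "(Ginv \<longlongrightarrow> 0) (at_right 0)"
  proof (rule tendsto_sandwich[of "\<lambda>_. 0" _ _ "\<lambda>x. x / m"])
    show "\<forall>\<^sub>F x in at_right 0. 0 \<le> Ginv x"
      using Ginv_pos by eventually_elim (rule less_imp_le)
    show "\<forall>\<^sub>F x in at_right 0. Ginv x \<le> x / m"
      using Ginv_bound by eventually_elim (simp only: pos_le_divide_eq[OF rate_pos] mult.commute)
    show "((\<lambda>x. x / m) \<longlongrightarrow> 0) (at_right 0)"
      by (rule tendsto_divide_zero[OF tendsto_ident_at])
  qed simp
  then have "filterlim Ginv (at_right 0) (at_right 0)"
    using Ginv_pos by (rule tendsto_imp_filterlim_at_right)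
  then have "((\<lambda>x. H (Ginv x) / Ginv x) \<longlongrightarrow> 0) (at_right 0)"
    by (rule filterlim_compose[OF H_lim])
  then have majorant: "((\<lambda>x. norm (H (Ginv x) / Ginv x) / m) \<longlongrightarrow> 0) (at_right 0)"
    by (intro tendsto_divide_zero tendsto_norm_zero)
  have "\<forall>\<^sub>F x in at_right 0. norm (H (Ginv x) / x) \<le> norm (H (Ginv x) / Ginv x) / m"
    using near
  proof eventually_elim
    fix x assume x: "x \<in> {0<..m * \<delta>}"
    then show "norm (H (Ginv x) / x) \<le> norm (H (Ginv x) / Ginv x) / m"
      using divide_left_mono[of "m * Ginv x" x "\<bar>H (Ginv x)\<bar>"] pos[OF x] rate_pos
      by (simp add: abs_div divide_divide_eq_left mult.commute)
  qed
  then have lim: "((\<lambda>x. H (Ginv x) / x) \<longlongrightarrow> 0) (at_right 0)"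
    using majorant by (rule Lim_null_comparison)
  have eq: "(\<lambda>x. ((H \<circ> Ginv) (0 + x *\<^sub>R 1) - (H \<circ> Ginv) 0) /\<^sub>R x) = (\<lambda>x. H (Ginv x) / x)"
    using Ginv_zero \<open>0 < \<delta>\<close> \<open>H 0 = 0\<close> by (simp add: divide_inverse_commute[symmetric])
  show ?thesis
    unfolding has_onesided_dirderiv_def eq by (rule lim)
qed

lemma convex_lipschitz_compose_Ginv:
  fixes H w :: "real \<Rightarrow> real"
  assumes H_slope: "\<And>s t. 0 \<le> s \<Longrightarrow> s < t \<Longrightarrow> t \<le> \<delta> \<Longrightarrow> \<bar>slope H s t\<bar> \<le> M"
    and w_slope: "\<And>s t. 0 \<le> s \<Longrightarrow> s < t \<Longrightarrow> t \<le> \<delta> \<Longrightarrow> l \<le> slope w s t \<and> slope w s t \<le> l + m / 2"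
    and increments: "\<And>s t u. 0 \<le> s \<Longrightarrow> s < t \<Longrightarrow> t < u \<Longrightarrow> u \<le> \<delta> \<Longrightarrow>
      \<bar>slope G t u - slope G s t\<bar> \<le> slope w t u - slope w s t \<and>
      \<bar>slope H t u - slope H s t\<bar> \<le> slope w t u - slope w s t"
    and "\<bar>\<sigma>\<bar> = 1" "0 \<le> M"
  defines "C \<equiv> 2 + 2 * M / m"
    and "P \<equiv> \<lambda>t. (2 + 2 * M / m) / 2 * (w t - l * t) + \<sigma> / 2 * H t"
  shows "convex_on {0..m * \<delta>} (P \<circ> Ginv)" "(C + M / m)-lipschitz_on {0..m * \<delta>} (P \<circ> Ginv)"
proof -
  have Ginv_interval: "0 \<le> Ginv x \<and> Ginv x < Ginv y \<and> Ginv y \<le> \<delta>"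
    if "x \<in> {0..m * \<delta>}" "y \<in> {0..m * \<delta>}" "x < y" for x y
    using strict_mono_onD[OF Ginv_strict_mono that] Ginv_mem that by fastforce
  have slope_PG: "slope (P \<circ> Ginv) x y = (C * (slope w (Ginv x) (Ginv y) - l)
      + \<sigma> * slope H (Ginv x) (Ginv y)) / (2 * slope G (Ginv x) (Ginv y))"
    if "x \<in> {0..m * \<delta>}" "y \<in> {0..m * \<delta>}" "x < y" for x y
  proof -
    have "Ginv x \<noteq> Ginv y" using Ginv_interval[OF that] by simp
    then have slope_P: "slope P (Ginv x) (Ginv y)
        = (C * (slope w (Ginv x) (Ginv y) - l) + \<sigma> * slope H (Ginv x) (Ginv y)) / 2"
      unfolding P_def C_def[symmetric] slope_add slope_cmult slope_diff using slope_ident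
      by (simp add: algebra_simps)
    have "slope (P \<circ> Ginv) x y = slope P (Ginv x) (Ginv y) / slope G (Ginv x) (Ginv y)"
      using slope_compose[of G Ginv x y P] G_Ginv that \<open>Ginv x \<noteq> Ginv y\<close> by simp
    then show ?thesis unfolding slope_P divide_divide_eq_left .
  qed
  show "convex_on {0..m * \<delta>} (P \<circ> Ginv)"
  proof (rule convex_on_if_slope_mono)
    fix x y z assume xz: "x \<in> {0..m * \<delta>}" "z \<in> {0..m * \<delta>}" "x < y" "y < z"
    then have y: "y \<in> {0..m * \<delta>}" by auto
    have t: "0 \<le> Ginv x" "Ginv x < Ginv y" "Ginv y < Ginv z" "Ginv z \<le> \<delta>"
      using Ginv_interval[OF xz(1) y xz(3)] Ginv_interval[OF y xz(2,4)] by auto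
    show "slope (P \<circ> Ginv) x y \<le> slope (P \<circ> Ginv) y z"
      unfolding slope_PG[OF xz(1) y xz(3)] slope_PG[OF y xz(2,4)] C_def
      using quotient_mono[where a = "slope G (Ginv x) (Ginv y)" and a' = "slope G (Ginv y) (Ginv z)"
          and w = "slope w (Ginv x) (Ginv y) - l" and w' = "slope w (Ginv y) (Ginv z) - l"
          and b = "slope H (Ginv x) (Ginv y)" and b' = "slope H (Ginv y) (Ginv z)"
          and M = M and \<sigma> = \<sigma>, OF rate_pos]
        slope_ge[of "Ginv x" "Ginv y"] slope_ge[of "Ginv y" "Ginv z"]
        w_slope[of "Ginv x" "Ginv y"] H_slope[of "Ginv x" "Ginv y"]
        increments[OF t] t \<open>\<bar>\<sigma>\<bar> = 1\<close>
      by auto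
  qed simp
  show "(C + M / m)-lipschitz_on {0..m * \<delta>} (P \<circ> Ginv)"
  proof (rule lipschitz_on_if_slope_bounded)
    show "0 \<le> C + M / m" unfolding C_def using rate_pos \<open>0 \<le> M\<close> by simp
    fix x y assume xy: "x \<in> {0..m * \<delta>}" "y \<in> {0..m * \<delta>}" "x < y"
    show "\<bar>slope (P \<circ> Ginv) x y\<bar> \<le> C + M / m"
      unfolding slope_PG[OF xy] C_def
      using quotient_bound[where a = "slope G (Ginv x) (Ginv y)" and w = "slope w (Ginv x) (Ginv y) - l"
          and b = "slope H (Ginv x) (Ginv y)" and M = M and \<sigma> = \<sigma>, OF rate_pos]
        slope_ge[of "Ginv x" "Ginv y"] w_slope[of "Ginv x" "Ginv y"] H_slope[of "Ginv x" "Ginv y"]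
        Ginv_interval[OF xy] \<open>\<bar>\<sigma>\<bar> = 1\<close>
      by auto
  qed
qed

lemma DCR_on_compose_Ginv:
  fixes H w :: "real \<Rightarrow> real"
  assumes "0 < \<delta>"
    and H_slope: "\<And>s t. 0 \<le> s \<Longrightarrow> s < t \<Longrightarrow> t \<le> \<delta> \<Longrightarrow> \<bar>slope H s t\<bar> \<le> M"
    and w_slope: "\<And>s t. 0 \<le> s \<Longrightarrow> s < t \<Longrightarrow> t \<le> \<delta> \<Longrightarrow> l \<le> slope w s t \<and> slope w s t \<le> l + m / 2"
    and w_G: "convex_on {0..\<delta>} (\<lambda>t. w t + G t)" "convex_on {0..\<delta>} (\<lambda>t. w t - G t)"
    and w_H: "convex_on {0..\<delta>} (\<lambda>t. w t + H t)" "convex_on {0..\<delta>} (\<lambda>t. w t - H t)"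
  shows "DCR_on {0..m * \<delta>} (H \<circ> Ginv)"
proof -
  have "0 \<le> M" using H_slope[of 0 \<delta>] \<open>0 < \<delta>\<close> by linarith
  text \<open>On adjacent intervals the slopes of \<open>G\<close> and \<open>H\<close> change by at most the change of
    the slope of \<open>w\<close>, because \<open>w \<plusminus> G\<close> and \<open>w \<plusminus> H\<close> are convex.\<close>
  have increments: "\<bar>slope G t u - slope G s t\<bar> \<le> slope w t u - slope w s t \<and>
      \<bar>slope H t u - slope H s t\<bar> \<le> slope w t u - slope w s t"
    if "0 \<le> s" "s < t" "t < u" "u \<le> \<delta>" for s t u
    using convex_on_slope_mono(3)[OF w_G(1), of s u t] convex_on_slope_mono(3)[OF w_G(2), of s u t]
      convex_on_slope_mono(3)[OF w_H(1), of s u t] convex_on_slope_mono(3)[OF w_H(2), of s u t] that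
    by (auto simp: slope_add slope_diff abs_le_iff)
  define P where "P \<sigma> t = (2 + 2 * M / m) / 2 * (w t - l * t) + \<sigma> / 2 * H t" for \<sigma> t
  have parts: "convex_on {0..m * \<delta>} (P \<sigma> \<circ> Ginv)"
    "(2 + 2 * M / m + M / m)-lipschitz_on {0..m * \<delta>} (P \<sigma> \<circ> Ginv)" if "\<bar>\<sigma>\<bar> = 1" for \<sigma>
    using convex_lipschitz_compose_Ginv[OF H_slope w_slope increments that \<open>0 \<le> M\<close>]
    unfolding P_def by blast+
  show ?thesis
  proof (rule DCR_on_diff_convex_lipschitz[where P = "P 1 \<circ> Ginv" and Q = "P (-1) \<circ> Ginv"])
    show "0 \<le> m * \<delta>" using rate_pos \<open>0 < \<delta>\<close> by simp
    show "(H \<circ> Ginv) x = (P 1 \<circ> Ginv) x - (P (-1) \<circ> Ginv) x" for x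
      unfolding P_def by simp
  qed (use parts[of 1] parts[of "-1"] in auto)
qed

lemma DCR_on_compose_Ginv_pinched:
  fixes H A B A' B' :: "real \<Rightarrow> real"
  assumes "0 < \<delta>" and "4 * \<epsilon> \<le> m / 2"
    and convex: "convex_on {0..\<delta>} A" "convex_on {0..\<delta>} B" "convex_on {0..\<delta>} A'" "convex_on {0..\<delta>} B'"
    and G_eq: "\<And>t. t \<in> {0..\<delta>} \<Longrightarrow> G t = A t - B t"
    and H_eq: "\<And>t. t \<in> {0..\<delta>} \<Longrightarrow> H t = A' t - B' t"
    and pinched: "\<And>s t. 0 \<le> s \<Longrightarrow> s < t \<Longrightarrow> t \<le> \<delta> \<Longrightarrow>
      lA \<le> slope A s t \<and> slope A s t \<le> lA + \<epsilon> \<and> lB \<le> slope B s t \<and> slope B s t \<le> lB + \<epsilon> \<and>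
      lA' \<le> slope A' s t \<and> slope A' s t \<le> lA' + \<epsilon> \<and> lB' \<le> slope B' s t \<and> slope B' s t \<le> lB' + \<epsilon>"
    and H_slope: "\<And>s t. 0 \<le> s \<Longrightarrow> s < t \<Longrightarrow> t \<le> \<delta> \<Longrightarrow> \<bar>slope H s t\<bar> \<le> M"
  shows "DCR_on {0..m * \<delta>} (H \<circ> Ginv)"
proof (rule DCR_on_compose_Ginv[OF \<open>0 < \<delta>\<close> H_slope])
  define w where "w t = A t + B t + (A' t + B' t)" for t
  show "lA + lB + (lA' + lB') \<le> slope w s t \<and> slope w s t \<le> lA + lB + (lA' + lB') + m / 2"
    if "0 \<le> s" "s < t" "t \<le> \<delta>" for s t
    using pinched[OF that] \<open>4 * \<epsilon> \<le> m / 2\<close> unfolding w_def slope_add by auto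
  show "convex_on {0..\<delta>} (\<lambda>t. w t + G t)"
    by (rule convex_on_eq[of _ "\<lambda>t. (A t + A t) + (A' t + B' t)"])
      (use convex G_eq in \<open>auto simp: w_def intro!: convex_on_add\<close>)
  show "convex_on {0..\<delta>} (\<lambda>t. w t - G t)"
    by (rule convex_on_eq[of _ "\<lambda>t. (B t + B t) + (A' t + B' t)"])
      (use convex G_eq in \<open>auto simp: w_def intro!: convex_on_add\<close>)
  show "convex_on {0..\<delta>} (\<lambda>t. w t + H t)"
    by (rule convex_on_eq[of _ "\<lambda>t. (A t + B t) + (A' t + A' t)"])
      (use convex H_eq in \<open>auto simp: w_def intro!: convex_on_add\<close>)
  show "convex_on {0..\<delta>} (\<lambda>t. w t - H t)"
    by (rule convex_on_eq[of _ "\<lambda>t. (A t + B t) + (B' t + B' t)"])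
      (use convex H_eq in \<open>auto simp: w_def intro!: convex_on_add\<close>)
qed

end

lemma DC_on_continuous_on_interior:
  fixes G :: "real \<Rightarrow> real"
  assumes "DC_on {a..b} G"
  shows "continuous_on {a<..<b} G"
proof -
  obtain A B where AB: "convex_on {a..b} A" "convex_on {a..b} B" "\<And>t. t \<in> {a..b} \<Longrightarrow> G t = A t - B t"
    using assms unfolding DC_on_def by blast
  have "convex_on {a<..<b} A" "convex_on {a<..<b} B"
    using AB(1,2) by (auto elim: convex_on_subset)
  then have "continuous_on {a<..<b} (\<lambda>t. A t - B t)"
    by (intro continuous_on_diff convex_on_continuous) auto
  then show ?thesis by (rule continuous_on_eq) (use AB(3) in auto)
qed

lemma DC_on_pinched_decomposition:
  fixes G :: "real \<Rightarrow> real"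
  assumes "DC_on {-\<eta>..\<eta>} G" "0 < \<eta>" "0 < \<epsilon>"
  obtains A B lA lB where "convex_on {-\<eta>..\<eta>} A" "convex_on {-\<eta>..\<eta>} B"
    "\<And>t. t \<in> {-\<eta>..\<eta>} \<Longrightarrow> G t = A t - B t"
    "\<forall>\<^sub>F \<delta> in at_right 0. \<forall>s t. 0 \<le> s \<longrightarrow> s < t \<longrightarrow> t \<le> \<delta> \<longrightarrow>
       lA \<le> slope A s t \<and> slope A s t \<le> lA + \<epsilon> \<and> lB \<le> slope B s t \<and> slope B s t \<le> lB + \<epsilon>"
proof -
  obtain A B where AB: "convex_on {-\<eta>..\<eta>} A" "convex_on {-\<eta>..\<eta>} B" "\<And>t. t \<in> {-\<eta>..\<eta>} \<Longrightarrow> G t = A t - B t"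
    using assms(1) unfolding DC_on_def by blast
  obtain lA where lA:
    "\<forall>\<^sub>F \<delta> in at_right 0. \<forall>s t. 0 \<le> s \<longrightarrow> s < t \<longrightarrow> t \<le> \<delta> \<longrightarrow> lA \<le> slope A s t \<and> slope A s t \<le> lA + \<epsilon>"
    using convex_on_slopes_pinch[OF AB(1) assms(2,3)] .
  obtain lB where lB:
    "\<forall>\<^sub>F \<delta> in at_right 0. \<forall>s t. 0 \<le> s \<longrightarrow> s < t \<longrightarrow> t \<le> \<delta> \<longrightarrow> lB \<le> slope B s t \<and> slope B s t \<le> lB + \<epsilon>"
    using convex_on_slopes_pinch[OF AB(2) assms(2,3)] .
  have "\<forall>\<^sub>F \<delta> in at_right 0. \<forall>s t. 0 \<le> s \<longrightarrow> s < t \<longrightarrow> t \<le> \<delta> \<longrightarrow>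
       lA \<le> slope A s t \<and> slope A s t \<le> lA + \<epsilon> \<and> lB \<le> slope B s t \<and> slope B s t \<le> lB + \<epsilon>"
    using lA lB by eventually_elim blast
  with AB show thesis by (rule that)
qed

text \<open>The slopes of the convex parts of \<open>G\<close> and \<open>H\<close> are pinched to within \<open>c/16\<close> on a
  short interval \<open>[0, \<delta>]\<close>, and at \<open>t = \<delta>\<close> the difference quotients are already close to
  their limits; this forces the slopes of \<open>G\<close> to stay above \<open>c/2\<close> and those of \<open>H\<close> to
  stay small.\<close>
lemma DC_compose_inverse_near_0:
  fixes G H :: "real \<Rightarrow> real"
  assumes DC: "DC_on {-\<eta>..\<eta>} G" "DC_on {-\<eta>..\<eta>} H" and "0 < \<eta>" "0 < c" "G 0 = 0" "H 0 = 0"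
    and G_lim: "((\<lambda>t. G t / t) \<longlongrightarrow> c) (at_right 0)"
    and H_lim: "((\<lambda>t. H t / t) \<longlongrightarrow> 0) (at_right 0)"
  obtains \<delta> where "0 < \<delta>" "\<delta> < \<eta>" "expanding_from_0 (c / 2) \<delta> G"
    "DCR_on {0..c / 2 * \<delta>} (H \<circ> the_inv_into {0..\<delta>} G)"
proof -
  define \<epsilon> where "\<epsilon> = c / 16"
  have "0 < \<epsilon>" using \<open>0 < c\<close> unfolding \<epsilon>_def by simp
  obtain A B lA lB where AB: "convex_on {-\<eta>..\<eta>} A" "convex_on {-\<eta>..\<eta>} B"
      "\<And>t. t \<in> {-\<eta>..\<eta>} \<Longrightarrow> G t = A t - B t"
    and pinch_G: "\<forall>\<^sub>F \<delta> in at_right 0. \<forall>s t. 0 \<le> s \<longrightarrow> s < t \<longrightarrow> t \<le> \<delta> \<longrightarrow>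
       lA \<le> slope A s t \<and> slope A s t \<le> lA + \<epsilon> \<and> lB \<le> slope B s t \<and> slope B s t \<le> lB + \<epsilon>"
    using DC_on_pinched_decomposition[OF DC(1) \<open>0 < \<eta>\<close> \<open>0 < \<epsilon>\<close>] by blast
  obtain A' B' lA' lB' where AB': "convex_on {-\<eta>..\<eta>} A'" "convex_on {-\<eta>..\<eta>} B'"
      "\<And>t. t \<in> {-\<eta>..\<eta>} \<Longrightarrow> H t = A' t - B' t"
    and pinch_H: "\<forall>\<^sub>F \<delta> in at_right 0. \<forall>s t. 0 \<le> s \<longrightarrow> s < t \<longrightarrow> t \<le> \<delta> \<longrightarrow>
       lA' \<le> slope A' s t \<and> slope A' s t \<le> lA' + \<epsilon> \<and> lB' \<le> slope B' s t \<and> slope B' s t \<le> lB' + \<epsilon>"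
    using DC_on_pinched_decomposition[OF DC(2) \<open>0 < \<eta>\<close> \<open>0 < \<epsilon>\<close>] by blast
  have "\<forall>\<^sub>F \<delta> in at_right 0. 0 < \<delta> \<and> \<delta> < \<eta>"
    unfolding eventually_at_right_field using \<open>0 < \<eta>\<close> by (intro exI[of _ \<eta>]) auto
  moreover have "\<forall>\<^sub>F \<delta> in at_right 0. \<bar>G \<delta> / \<delta> - c\<bar> < \<epsilon> \<and> \<bar>H \<delta> / \<delta>\<bar> < \<epsilon>"
    using tendstoD[OF G_lim \<open>0 < \<epsilon>\<close>] tendstoD[OF H_lim \<open>0 < \<epsilon>\<close>]
    by eventually_elim (simp add: dist_real_def)
  ultimately have "\<forall>\<^sub>F \<delta> in at_right 0. (0 < \<delta> \<and> \<delta> < \<eta>) \<and> (\<bar>G \<delta> / \<delta> - c\<bar> < \<epsilon> \<and> \<bar>H \<delta> / \<delta>\<bar> < \<epsilon>) \<and>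
      (\<forall>s t. 0 \<le> s \<longrightarrow> s < t \<longrightarrow> t \<le> \<delta> \<longrightarrow>
       lA \<le> slope A s t \<and> slope A s t \<le> lA + \<epsilon> \<and> lB \<le> slope B s t \<and> slope B s t \<le> lB + \<epsilon>) \<and>
      (\<forall>s t. 0 \<le> s \<longrightarrow> s < t \<longrightarrow> t \<le> \<delta> \<longrightarrow>
       lA' \<le> slope A' s t \<and> slope A' s t \<le> lA' + \<epsilon> \<and> lB' \<le> slope B' s t \<and> slope B' s t \<le> lB' + \<epsilon>)"
    using pinch_G pinch_H by eventually_elim blast
  then obtain \<delta> where \<delta>: "0 < \<delta>" "\<delta> < \<eta>" "\<bar>G \<delta> / \<delta> - c\<bar> < \<epsilon>" "\<bar>H \<delta> / \<delta>\<bar> < \<epsilon>"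
    and pinched: "\<And>s t. 0 \<le> s \<Longrightarrow> s < t \<Longrightarrow> t \<le> \<delta> \<Longrightarrow>
       lA \<le> slope A s t \<and> slope A s t \<le> lA + \<epsilon> \<and> lB \<le> slope B s t \<and> slope B s t \<le> lB + \<epsilon> \<and>
       lA' \<le> slope A' s t \<and> slope A' s t \<le> lA' + \<epsilon> \<and> lB' \<le> slope B' s t \<and> slope B' s t \<le> lB' + \<epsilon>"
    using eventually_happens'[OF trivial_limit_at_right_real] by blast
  have sub: "{0..\<delta>} \<subseteq> {-\<eta>..\<eta>}" using \<delta> by auto
  have slopes: "slope G s t = slope A s t - slope B s t \<and> slope H s t = slope A' s t - slope B' s t"
    if "0 \<le> s" "s < t" "t \<le> \<delta>" for s t
    using AB(3)[of s] AB(3)[of t] AB'(3)[of s] AB'(3)[of t] that \<delta>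
    unfolding slope_def by (simp add: diff_divide_distrib[symmetric] algebra_simps)
  have at_\<delta>: "slope G 0 \<delta> = G \<delta> / \<delta>" "slope H 0 \<delta> = H \<delta> / \<delta>"
    using \<open>G 0 = 0\<close> \<open>H 0 = 0\<close> unfolding slope_def by simp_all
  have G_slope: "c / 2 \<le> slope G s t" and H_slope: "\<bar>slope H s t\<bar> \<le> 3 * \<epsilon>"
    if "0 \<le> s" "s < t" "t \<le> \<delta>" for s t
  proof -
    have "c = 16 * \<epsilon>" unfolding \<epsilon>_def by simp
    then show "c / 2 \<le> slope G s t" "\<bar>slope H s t\<bar> \<le> 3 * \<epsilon>"
      using pinched[OF that] slopes[OF that] pinched[of 0 \<delta>] slopes[of 0 \<delta>] at_\<delta> \<delta>(1)
        \<delta>(3,4)[unfolded abs_less_iff] unfolding abs_le_iff by auto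
  qed
  have G_cont: "continuous_on {0..\<delta>} G"
    using DC_on_continuous_on_interior[OF DC(1)] by (rule continuous_on_subset) (use \<delta> in auto)
  interpret expanding_from_0 "c / 2" \<delta> G
    using G_slope G_cont \<open>G 0 = 0\<close> \<open>0 < c\<close> by unfold_locales auto
  have "DCR_on {0..c / 2 * \<delta>} (H \<circ> Ginv)"
    using DCR_on_compose_Ginv_pinched[OF \<open>0 < \<delta>\<close> _ convex_on_subset[OF AB(1) sub]
        convex_on_subset[OF AB(2) sub] convex_on_subset[OF AB'(1) sub] convex_on_subset[OF AB'(2) sub]
        AB(3) AB'(3) pinched H_slope] sub
    unfolding \<epsilon>_def by auto
  with \<delta> show thesis using that expanding_from_0_axioms by blast
qed

section \<open>DC functions along curves in the plane\<close>

lemma norm_Pair_add_le: "norm (t, y + e) \<le> norm (t, y) + \<bar>e\<bar>"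
  for t y e :: real
  using norm_triangle_ineq[of "(t, y)" "(0, e)"] by (simp add: norm_Pair)

lemma norm_Pair_le_abs: "norm (a, b) \<le> \<bar>a\<bar> + \<bar>b\<bar>"
  for a b :: real
  using norm_Pair_add_le[of a 0 b] by (simp add: norm_Pair)

lemma convex_vertical_section:
  fixes U :: "(real \<times> real) set"
  assumes "convex U"
  shows "convex {y. (t, y) \<in> U}"
proof (rule convexI)
  fix x y u v :: real
  assume "x \<in> {y. (t, y) \<in> U}" "y \<in> {y. (t, y) \<in> U}" "0 \<le> u" "0 \<le> v" "u + v = 1"
  then have "u *\<^sub>R (t, x) + v *\<^sub>R (t, y) \<in> U" using convexD[OF assms] by blast
  moreover have "u * t + v * t = t" using \<open>u + v = 1\<close> by (metis distrib_right mult_1)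
  ultimately show "u *\<^sub>R x + v *\<^sub>R y \<in> {y. (t, y) \<in> U}" by simp
qed

lemma convex_on_vertical_section:
  fixes u :: "real \<times> real \<Rightarrow> real"
  assumes "convex_on U u"
  shows "convex_on {y. (t, y) \<in> U} (\<lambda>y. u (t, y))"
proof (rule convex_onI)
  fix \<mu> x y :: real assume "0 < \<mu>" "\<mu> < 1" "x \<in> {y. (t, y) \<in> U}" "y \<in> {y. (t, y) \<in> U}"
  moreover have "(t, (1 - \<mu>) *\<^sub>R x + \<mu> *\<^sub>R y) = (1 - \<mu>) *\<^sub>R (t, x) + \<mu> *\<^sub>R (t, y)"
    by (simp add: algebra_simps)
  ultimately show "u (t, (1 - \<mu>) *\<^sub>R x + \<mu> *\<^sub>R y) \<le> (1 - \<mu>) * u (t, x) + \<mu> * u (t, y)"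
    using convex_onD[OF assms, of \<mu> "(t, x)" "(t, y)"] by simp
qed (rule convex_vertical_section[OF convex_on_imp_convex[OF assms]])

lemma convex_on_vertically_lipschitz:
  fixes u :: "real \<times> real \<Rightarrow> real"
  assumes "open U" "convex_on U u" "0 < \<rho>" "cball 0 (2 * \<rho>) \<subseteq> U"
  shows "\<exists>L. \<forall>t. L-lipschitz_on {y. (t, y) \<in> cball 0 \<rho>} (\<lambda>y. u (t, y))"
proof -
  have "continuous_on (cball 0 (2 * \<rho>)) u"
    using convex_on_continuous[OF assms(1,2)] assms(4) by (rule continuous_on_subset)
  then obtain M where M: "0 \<le> M" "\<And>z. z \<in> cball 0 (2 * \<rho>) \<Longrightarrow> \<bar>u z\<bar> \<le> M"
    using continuous_on_compact_bound[OF compact_cball] by (metis real_norm_def)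
  have "(2 * M / \<rho>)-lipschitz_on {y. (t, y) \<in> cball 0 \<rho>} (\<lambda>y. u (t, y))" for t
  proof (rule lipschitz_on_leI)
    fix y y' :: real assume y: "y \<in> {y. (t, y) \<in> cball 0 \<rho>}" "y' \<in> {y. (t, y) \<in> cball 0 \<rho>}" "y \<le> y'"
    define V where "V = {y. (t, y) \<in> cball (0 :: real \<times> real) (2 * \<rho>)}"
    have "y - \<rho> \<in> V" "y' + \<rho> \<in> V"
      using y norm_Pair_add_le[of t y "- \<rho>"] norm_Pair_add_le[of t y' \<rho>] \<open>0 < \<rho>\<close>
      unfolding V_def by auto
    then have sub: "{y - \<rho>..y' + \<rho>} \<subseteq> V"
      unfolding V_def using y(3) \<open>0 < \<rho>\<close>
      by (intro atMostAtLeast_subset_convex[OF convex_vertical_section[OF convex_cball]]) auto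
    have "convex_on {y - \<rho>..y' + \<rho>} (\<lambda>y. u (t, y))"
    proof (rule convex_on_subset[OF convex_on_vertical_section[OF assms(2), of t]])
      show "{y - \<rho>..y' + \<rho>} \<subseteq> {y. (t, y) \<in> U}" using sub assms(4) unfolding V_def by blast
    qed simp
    then have "(2 * M / \<rho>)-lipschitz_on {y..y'} (\<lambda>y. u (t, y))"
      using sub M(2) \<open>0 < \<rho>\<close> y(3) unfolding V_def by (intro convex_on_bounded_imp_lipschitz_on) auto
    then show "dist (u (t, y)) (u (t, y')) \<le> 2 * M / \<rho> * dist y y'"
      by (rule lipschitz_onD) (use y(3) in auto)
  qed (use M \<open>0 < \<rho>\<close> in simp)
  then show ?thesis by blast
qed

text \<open>The error of \<open>u\<close> against its chords along the curve is bounded by \<open>L\<close> times the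
  errors of \<open>p\<close> and \<open>q\<close> against theirs, and \<open>L (p + q)\<close> absorbs it.\<close>
lemma convex_on_along_DC_graph:
  fixes u :: "real \<times> real \<Rightarrow> real" and p q :: "real \<Rightarrow> real"
  assumes u: "convex_on K u" and lip: "\<And>t. L-lipschitz_on {y. (t, y) \<in> K} (\<lambda>y. u (t, y))"
    and p: "convex_on I p" and q: "convex_on I q"
    and graph: "\<And>t. t \<in> I \<Longrightarrow> (t, p t - q t) \<in> K"
  shows "convex_on I (\<lambda>t. u (t, p t - q t) + L * (p t + q t))"
proof (rule convex_onI)
  show I: "convex I" using convex_on_imp_convex[OF p] .
  have K: "convex K" using convex_on_imp_convex[OF u] .
  have L: "0 \<le> L" using lipschitz_on_nonneg[OF lip] .
  fix \<mu> x y :: real assume \<mu>: "0 < \<mu>" "\<mu> < 1" and xy: "x \<in> I" "y \<in> I"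
  define z where "z = (1 - \<mu>) * x + \<mu> * y"
  define Y where "Y = (1 - \<mu>) * (p x - q x) + \<mu> * (p y - q y)"
  have z: "z \<in> I" using convexD[OF I xy, of "1 - \<mu>" \<mu>] \<mu> unfolding z_def by simp
  have zY: "(z, Y) = (1 - \<mu>) *\<^sub>R (x, p x - q x) + \<mu> *\<^sub>R (y, p y - q y)"
    unfolding z_def Y_def by simp
  then have "(z, Y) \<in> K" using convexD[OF K graph[OF xy(1)] graph[OF xy(2)], of "1 - \<mu>" \<mu>] \<mu> by simp
  have u_chord: "u (z, Y) \<le> (1 - \<mu>) * u (x, p x - q x) + \<mu> * u (y, p y - q y)"
    unfolding zY using convex_onD[OF u, of \<mu> "(x, p x - q x)" "(y, p y - q y)"] \<mu> graph xy by simp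
  define P where "P = (1 - \<mu>) * p x + \<mu> * p y - p z"
  define Q where "Q = (1 - \<mu>) * q x + \<mu> * q y - q z"
  have "0 \<le> P" "0 \<le> Q"
    unfolding P_def Q_def z_def using convex_onD[OF p, of \<mu> x y] convex_onD[OF q, of \<mu> x y] \<mu> xy by simp_all
  have "\<bar>u (z, p z - q z) - u (z, Y)\<bar> \<le> L * \<bar>(p z - q z) - Y\<bar>"
    using lipschitz_onD[OF lip, of "p z - q z" z Y] graph[OF z] \<open>(z, Y) \<in> K\<close> by (simp add: dist_real_def)
  also have "\<dots> \<le> L * (P + Q)"
    unfolding P_def Q_def Y_def using \<open>0 \<le> P\<close> \<open>0 \<le> Q\<close> L unfolding P_def Q_def
    by (intro mult_left_mono) (auto simp: abs_le_iff algebra_simps)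
  finally have "u (z, p z - q z) + L * (p z + q z) \<le> u (z, Y) + L * (P + Q + p z + q z)"
    by (simp add: algebra_simps)
  also have "\<dots> \<le> (1 - \<mu>) * (u (x, p x - q x) + L * (p x + q x)) + \<mu> * (u (y, p y - q y) + L * (p y + q y))"
    using u_chord unfolding P_def Q_def by (simp add: algebra_simps)
  finally show "u ((1 - \<mu>) *\<^sub>R x + \<mu> *\<^sub>R y, p ((1 - \<mu>) *\<^sub>R x + \<mu> *\<^sub>R y) - q ((1 - \<mu>) *\<^sub>R x + \<mu> *\<^sub>R y))
      + L * (p ((1 - \<mu>) *\<^sub>R x + \<mu> *\<^sub>R y) + q ((1 - \<mu>) *\<^sub>R x + \<mu> *\<^sub>R y))
      \<le> (1 - \<mu>) * (u (x, p x - q x) + L * (p x + q x)) + \<mu> * (u (y, p y - q y) + L * (p y + q y))"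
    unfolding z_def by simp
qed

lemma curve_near_0_in_cball:
  fixes g :: "real \<Rightarrow> real"
  assumes "isCont g 0" "g 0 = 0" "0 < \<rho>"
  obtains \<eta> where "0 < \<eta>" "\<And>t. t \<in> {-\<eta>..\<eta>} \<Longrightarrow> (t, g t) \<in> cball 0 \<rho>"
proof -
  have "isCont (\<lambda>t. (t, g t)) 0" using assms(1) by (intro continuous_intros)
  then obtain d where "0 < d" "\<And>t. dist t 0 < d \<Longrightarrow> dist (t, g t) (0, g 0) < \<rho>"
    using \<open>0 < \<rho>\<close> unfolding continuous_at_eps_delta by blast
  show thesis
  proof (rule that)
    show "0 < d / 2" using \<open>0 < d\<close> by simp
    fix t assume "t \<in> {- (d / 2)..d / 2}"
    then have "dist (t, g t) (0, g 0) < \<rho>" using \<open>0 < d\<close> \<open>dist t 0 < d \<Longrightarrow> _\<close> by auto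
    then show "(t, g t) \<in> cball 0 \<rho>" using \<open>g 0 = 0\<close> by (simp add: mem_cball dist_commute zero_prod_def)
  qed
qed

section \<open>Images of graphs\<close>

definition image_graph_fun :: "(real \<times> real \<Rightarrow> real \<times> real) \<Rightarrow> real \<Rightarrow> (real \<Rightarrow> real) \<Rightarrow> real \<Rightarrow> real" where
  "image_graph_fun F \<delta> h = (\<lambda>t. snd (F (t, h t))) \<circ> the_inv_into {0..\<delta>} (\<lambda>t. fst (F (t, h t)))"

lemma graph_image_graph_fun:
  assumes "expanding_from_0 m \<delta> (\<lambda>t. fst (F (t, h t)))" "0 \<le> b" "b \<le> m * \<delta>"
  shows "F ` graph_on {0..\<delta>} h \<inter> {p. fst p \<le> b} = graph_on {0..b} (image_graph_fun F \<delta> h)"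
proof -
  interpret expanding_from_0 m \<delta> "\<lambda>t. fst (F (t, h t))" by fact
  have b: "{0..b} \<subseteq> {0..m * \<delta>}" using assms(3) by auto
  show ?thesis
  proof (intro equalityI subsetI)
    fix p assume "p \<in> F ` graph_on {0..\<delta>} h \<inter> {p. fst p \<le> b}"
    then obtain t where t: "t \<in> {0..\<delta>}" "p = F (t, h t)" "fst p \<le> b" by (auto simp: graph_on_def)
    have "0 \<le> fst p" using ge_rate[OF t(1)] rate_pos t by (simp add: order_trans[OF _ ge_rate])
    moreover have "Ginv (fst p) = t" using Ginv_G[OF t(1)] t(2) by simp
    ultimately show "p \<in> graph_on {0..b} (image_graph_fun F \<delta> h)"
      using t unfolding graph_on_def image_graph_fun_def by (auto intro!: exI[of _ "fst p"])
  next
    fix p assume "p \<in> graph_on {0..b} (image_graph_fun F \<delta> h)"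
    then obtain x where x: "x \<in> {0..b}" "p = (x, image_graph_fun F \<delta> h x)" by (auto simp: graph_on_def)
    then have "x \<in> {0..m * \<delta>}" using b by auto
    then have "Ginv x \<in> {0..\<delta>}" "fst (F (Ginv x, h (Ginv x))) = x"
      using Ginv_mem G_Ginv by auto
    moreover from this have "p = F (Ginv x, h (Ginv x))"
      using x(2) unfolding image_graph_fun_def by (simp add: prod_eq_iff)
    ultimately show "p \<in> F ` graph_on {0..\<delta>} h \<inter> {p. fst p \<le> b}"
      using x(1) by (auto simp: graph_on_def)
  qed
qed

lemma continuous_on_image_graph_fun:
  assumes "expanding_from_0 m \<delta> (\<lambda>t. fst (F (t, h t)))"
    and "continuous_on {0..\<delta>} (\<lambda>t. snd (F (t, h t)))"
  shows "continuous_on {0..m * \<delta>} (image_graph_fun F \<delta> h)"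
proof -
  interpret expanding_from_0 m \<delta> "\<lambda>t. fst (F (t, h t))" by fact
  have "continuous_on (Ginv ` {0..m * \<delta>}) (\<lambda>t. snd (F (t, h t)))"
    using assms(2) by (rule continuous_on_subset) (use Ginv_mem in auto)
  then show ?thesis
    unfolding image_graph_fun_def by (rule continuous_on_compose[OF Ginv_continuous])
qed

lemma mem_graph_on_iff: "p \<in> graph_on D f \<longleftrightarrow> fst p \<in> D \<and> snd p = f (fst p)"
  unfolding graph_on_def by (cases p) auto

lemma image_graphs_eq_graphs:
  assumes "\<And>h. h \<in> H \<Longrightarrow> expanding_from_0 m a (\<lambda>t. fst (F (t, h t)))" "0 \<le> b" "b \<le> m * a"
  shows "F ` (\<Union>h\<in>H. graph_on {0..a} h) \<inter> {p. fst p \<le> b} = (\<Union>h\<in>H. graph_on {0..b} (image_graph_fun F a h))"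
proof -
  have "F ` (\<Union>h\<in>H. graph_on {0..a} h) \<inter> {p. fst p \<le> b} = (\<Union>h\<in>H. F ` graph_on {0..a} h \<inter> {p. fst p \<le> b})"
    by blast
  also have "\<dots> = (\<Union>h\<in>H. graph_on {0..b} (image_graph_fun F a h))"
    using graph_image_graph_fun[OF assms(1) assms(2,3)] by simp
  finally show ?thesis .
qed

lemma slope_ge_along_covered_curve:
  fixes \<Phi> :: "real \<times> real \<Rightarrow> real" and h :: "real \<Rightarrow> real" and g :: "'i \<Rightarrow> real \<Rightarrow> real"
  assumes "finite I"
    and h: "continuous_on {0..a} h" and g: "\<And>i. i \<in> I \<Longrightarrow> continuous_on {0..a} (g i)"
    and cover: "\<And>t. t \<in> {0..a} \<Longrightarrow> \<exists>i\<in>I. h t = g i t"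
    and \<Phi>_h: "continuous_on {0..a} (\<lambda>t. \<Phi> (t, h t))"
    and \<Phi>_g: "\<And>i s t. i \<in> I \<Longrightarrow> 0 \<le> s \<Longrightarrow> s < t \<Longrightarrow> t \<le> a \<Longrightarrow> m \<le> slope (\<lambda>t. \<Phi> (t, g i t)) s t"
    and st: "0 \<le> s" "s < t" "t \<le> a"
  shows "m \<le> slope (\<lambda>t. \<Phi> (t, h t)) s t"
proof -
  have "mono_on {0..a} (\<lambda>t. \<Phi> (t, h t) - m * t)"
  proof (rule mono_on_if_eventually_right_mono)
    show "continuous_on {0..a} (\<lambda>t. \<Phi> (t, h t) - m * t)"
      using \<Phi>_h by (intro continuous_intros)
    fix x assume x: "x \<in> {0..<a}"
    define J where "J = {i \<in> I. g i x \<noteq> h x}"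
    have "\<forall>\<^sub>F y in at x within {0..a}. \<forall>i\<in>J. g i y \<noteq> h y"
    proof (rule eventually_ball_finite)
      show "finite J" using \<open>finite I\<close> unfolding J_def by simp
      show "\<forall>i\<in>J. \<forall>\<^sub>F y in at x within {0..a}. g i y \<noteq> h y"
      proof
        fix i assume i: "i \<in> J"
        have "((\<lambda>y. g i y - h y) \<longlongrightarrow> g i x - h x) (at x within {0..a})"
          using continuous_on_diff[OF g h] i x unfolding J_def continuous_on_def by auto
        then have "\<forall>\<^sub>F y in at x within {0..a}. g i y - h y \<noteq> 0"
          by (rule tendsto_imp_eventually_ne) (use i in \<open>simp add: J_def\<close>)
        then show "\<forall>\<^sub>F y in at x within {0..a}. g i y \<noteq> h y" by (rule eventually_mono) simp
      qed
    qed
    moreover have "at_right x \<le> at x within {0..a}"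
      using x at_within_Icc_at_right[of x a] at_le[of "{x..a}" "{0..a}" x] by auto
    ultimately have "\<forall>\<^sub>F y in at_right x. \<forall>i\<in>J. g i y \<noteq> h y" by (rule filter_leD[rotated])
    moreover have "\<forall>\<^sub>F y in at_right x. x < y" by (rule eventually_at_right_less)
    moreover have "\<forall>\<^sub>F y in at_right x. y < a"
      using x by (intro order_tendstoD(2)[OF tendsto_ident_at]) auto
    ultimately show "\<forall>\<^sub>F y in at_right x. \<Phi> (x, h x) - m * x \<le> \<Phi> (y, h y) - m * y"
    proof eventually_elim
      case (elim y)
      then obtain i where i: "i \<in> I" "h y = g i y" using cover[of y] x by auto
      then have "h x = g i x" using elim unfolding J_def by auto
      have "m * (y - x) \<le> \<Phi> (y, g i y) - \<Phi> (x, g i x)"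
        using \<Phi>_g[OF i(1), of x y] slope_ge_iff[of x y m "\<lambda>t. \<Phi> (t, g i t)"] x elim by auto
      then show ?case using i(2) \<open>h x = g i x\<close> by (simp add: algebra_simps)
    qed
  qed
  then have "\<Phi> (s, h s) - m * s \<le> \<Phi> (t, h t) - m * t" using st by (auto elim: mono_onD)
  then show ?thesis using slope_ge_iff[OF \<open>s < t\<close>, of m "\<lambda>t. \<Phi> (t, h t)"] by (simp add: algebra_simps)
qed

lemma DCR_on_subset: "DCR_on D f \<Longrightarrow> D' \<subseteq> D \<Longrightarrow> D' \<noteq> {} \<Longrightarrow> DCR_on D' f"
  unfolding DCR_on_def by blast

lemma s_set_origin:
  assumes "s_set S"
  shows "(0, 0) \<in> S"
proof -
  obtain r Fs H where "S \<noteq> {}" "0 < r" and Fs: "\<forall>f\<in>Fs. f 0 = 0" "S \<subseteq> (\<Union>f\<in>Fs. graph_on {0..r} f)"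
    and H: "S = (\<Union>h\<in>H. graph_on {0..r} h)"
    using assms unfolding s_set_def by blast
  then obtain h where "h \<in> H" by blast
  then have "(0, h 0) \<in> S" using H \<open>0 < r\<close> by (auto simp: graph_on_def)
  moreover from this have "h 0 = 0" using Fs by (auto simp: graph_on_def)
  ultimately show ?thesis by simp
qed

lemma onesided_dirderiv_0_quotient:
  fixes f :: "real \<Rightarrow> real"
  assumes "has_onesided_dirderiv f 0 1 0" "f 0 = 0"
  shows "((\<lambda>t. f t / t) \<longlongrightarrow> 0) (at_right 0)"
  using assms unfolding has_onesided_dirderiv_def by (simp add: divide_inverse_commute)

section \<open>DC maps near the origin\<close>

locale DC_map_near_0 =
  fixes F :: "real \<times> real \<Rightarrow> real \<times> real" and c \<rho> L :: real
    and u1 v1 u2 v2 :: "real \<times> real \<Rightarrow> real"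
  assumes c_pos: "0 < c" and rho_pos: "0 < \<rho>"
    and convex_parts: "\<And>u. u \<in> {u1, v1, u2, v2} \<Longrightarrow> convex_on (cball 0 \<rho>) u"
    and lipschitz_parts:
      "\<And>u t. u \<in> {u1, v1, u2, v2} \<Longrightarrow> L-lipschitz_on {y. (t, y) \<in> cball 0 \<rho>} (\<lambda>y. u (t, y))"
    and F_eq: "\<And>z. z \<in> cball 0 \<rho> \<Longrightarrow> F z = (u1 z - v1 z, u2 z - v2 z)"
    and F_continuous: "continuous_on (cball 0 \<rho>) F"
    and F_zero: "F (0, 0) = (0, 0)"
    and F_dirderiv: "has_onesided_dirderiv F (0, 0) (1, 0) (c, 0)"
begin

lemma F_vertical_lipschitz:
  assumes "(t, y) \<in> cball 0 \<rho>" "(t, y') \<in> cball 0 \<rho>"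
  shows "norm (F (t, y) - F (t, y')) \<le> 4 * L * \<bar>y - y'\<bar>"
proof -
  have lip: "\<bar>u (t, y) - u (t, y')\<bar> \<le> L * \<bar>y - y'\<bar>" if "u \<in> {u1, v1, u2, v2}" for u
    using lipschitz_onD[OF lipschitz_parts[OF that, of t], of y y'] assms by (simp add: dist_real_def)
  have "F (t, y) - F (t, y') = ((u1 (t, y) - u1 (t, y')) - (v1 (t, y) - v1 (t, y')),
      (u2 (t, y) - u2 (t, y')) - (v2 (t, y) - v2 (t, y')))"
    using F_eq[OF assms(1)] F_eq[OF assms(2)] by simp
  then have "norm (F (t, y) - F (t, y')) \<le> \<bar>(u1 (t, y) - u1 (t, y')) - (v1 (t, y) - v1 (t, y'))\<bar>
      + \<bar>(u2 (t, y) - u2 (t, y')) - (v2 (t, y) - v2 (t, y'))\<bar>"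
    by (simp only: norm_Pair_le_abs)
  also have "\<dots> \<le> 4 * L * \<bar>y - y'\<bar>"
    using lip[of u1, simplified] lip[of v1, simplified] lip[of u2, simplified] lip[of v2, simplified]
      abs_triangle_ineq4[of "u1 (t, y) - u1 (t, y')" "v1 (t, y) - v1 (t, y')"]
      abs_triangle_ineq4[of "u2 (t, y) - u2 (t, y')" "v2 (t, y) - v2 (t, y')"]
    by linarith
  finally show ?thesis .
qed

lemma DC_on_along_curve:
  assumes "convex_on I p" "convex_on I q" and graph: "\<And>t. t \<in> I \<Longrightarrow> (t, p t - q t) \<in> cball 0 \<rho>"
  shows "DC_on I (\<lambda>t. fst (F (t, p t - q t)))" "DC_on I (\<lambda>t. snd (F (t, p t - q t)))"
proof -
  define corrected where "corrected u t = u (t, p t - q t) + L * (p t + q t)" for u t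
  have convex: "convex_on I (corrected u)" if "u \<in> {u1, v1, u2, v2}" for u
    unfolding corrected_def
    using convex_on_along_DC_graph[OF convex_parts[OF that] lipschitz_parts[OF that] assms] .
  have "fst (F (t, p t - q t)) = corrected u1 t - corrected v1 t"
    "snd (F (t, p t - q t)) = corrected u2 t - corrected v2 t" if "t \<in> I" for t
    using F_eq[OF graph[OF that]] unfolding corrected_def by simp_all
  then show "DC_on I (\<lambda>t. fst (F (t, p t - q t)))" "DC_on I (\<lambda>t. snd (F (t, p t - q t)))"
    unfolding DC_on_def using convex[of u1] convex[of v1] convex[of u2] convex[of v2] by auto
qed

lemma quotient_limits_along_curve:
  assumes "0 < \<eta>" and graph: "\<And>t. t \<in> {0..\<eta>} \<Longrightarrow> (t, g t) \<in> cball 0 \<rho>"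
    and g_lim: "((\<lambda>t. g t / t) \<longlongrightarrow> 0) (at_right 0)"
  shows "((\<lambda>t. fst (F (t, g t)) / t) \<longlongrightarrow> c) (at_right 0)"
    and "((\<lambda>t. snd (F (t, g t)) / t) \<longlongrightarrow> 0) (at_right 0)"
proof -
  have axis: "((\<lambda>t. F (t, 0) /\<^sub>R t) \<longlongrightarrow> (c, 0)) (at_right 0)"
    using F_dirderiv F_zero unfolding has_onesided_dirderiv_def by (simp add: zero_prod_def[symmetric])
  have near: "\<forall>\<^sub>F t in at_right 0. 0 < t \<and> t \<le> \<eta> \<and> t \<le> \<rho>"
    unfolding eventually_at_right_field using \<open>0 < \<eta>\<close> rho_pos
    by (intro exI[of _ "min \<eta> \<rho>"]) auto
  have "((\<lambda>t. (F (t, g t) - F (t, 0)) /\<^sub>R t) \<longlongrightarrow> 0) (at_right 0)"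
  proof (rule Lim_null_comparison)
    show "\<forall>\<^sub>F t in at_right 0. norm ((F (t, g t) - F (t, 0)) /\<^sub>R t) \<le> 4 * L * \<bar>g t / t\<bar>"
      using near
    proof eventually_elim
      case (elim t)
      have "(t, 0 :: real) \<in> cball 0 \<rho>" using elim by (simp add: norm_Pair)
      moreover have "(t, g t) \<in> cball 0 \<rho>" using graph elim by simp
      ultimately have le: "norm (F (t, g t) - F (t, 0)) / t \<le> 4 * L * \<bar>g t\<bar> / t"
        using F_vertical_lipschitz[of t "g t" 0] elim by (simp add: divide_right_mono)
      have "norm ((F (t, g t) - F (t, 0)) /\<^sub>R t) = norm (F (t, g t) - F (t, 0)) / t"
        using elim by (simp add: divide_inverse_commute)
      moreover have "4 * L * \<bar>g t / t\<bar> = 4 * L * \<bar>g t\<bar> / t"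
        using elim by (simp add: abs_div)
      ultimately show ?case using le by (simp only:)
    qed
    show "((\<lambda>t. 4 * L * \<bar>g t / t\<bar>) \<longlongrightarrow> 0) (at_right 0)"
      by (rule tendsto_mult_right_zero[OF tendsto_rabs_zero[OF g_lim]])
  qed
  from tendsto_add[OF this axis] have "((\<lambda>t. F (t, g t) /\<^sub>R t) \<longlongrightarrow> (c, 0)) (at_right 0)"
    by (simp add: algebra_simps)
  from tendsto_fst[OF this] tendsto_snd[OF this]
  show "((\<lambda>t. fst (F (t, g t)) / t) \<longlongrightarrow> c) (at_right 0)"
    "((\<lambda>t. snd (F (t, g t)) / t) \<longlongrightarrow> 0) (at_right 0)"
    by (simp_all add: divide_inverse_commute)
qed

definition tame_curve :: "real \<Rightarrow> (real \<Rightarrow> real) \<Rightarrow> bool" where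
  "tame_curve \<delta> g \<longleftrightarrow> 0 < \<delta> \<and> continuous_on {0..\<delta>} g \<and> (\<forall>t\<in>{0..\<delta>}. (t, g t) \<in> cball 0 \<rho>) \<and>
     expanding_from_0 (c / 2) \<delta> (\<lambda>t. fst (F (t, g t))) \<and>
     DCR_on {0..c / 2 * \<delta>} (image_graph_fun F \<delta> g) \<and> image_graph_fun F \<delta> g 0 = 0 \<and>
     has_onesided_dirderiv (image_graph_fun F \<delta> g) 0 1 0"

lemma tame_curve_exists:
  assumes "DC_on UNIV g" "g 0 = 0" and g_lim: "((\<lambda>t. g t / t) \<longlongrightarrow> 0) (at_right 0)"
  obtains \<delta> where "tame_curve \<delta> g"
proof -
  obtain p q where pq: "convex_on UNIV p" "convex_on UNIV q" "\<And>t. g t = p t - q t"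
    using assms(1) unfolding DC_on_def by blast
  have g_cont: "continuous_on UNIV g"
    unfolding pq(3) using pq(1,2) by (intro continuous_on_diff convex_on_continuous) auto
  have "isCont g 0" using g_cont by (simp add: continuous_on_eq_continuous_at)
  then obtain \<eta> where \<eta>: "0 < \<eta>" "\<And>t. t \<in> {-\<eta>..\<eta>} \<Longrightarrow> (t, g t) \<in> cball 0 \<rho>"
    using curve_near_0_in_cball \<open>g 0 = 0\<close> rho_pos by blast
  have "convex_on {-\<eta>..\<eta>} p" "convex_on {-\<eta>..\<eta>} q"
    using pq(1,2) by (auto elim: convex_on_subset)
  then have DC: "DC_on {-\<eta>..\<eta>} (\<lambda>t. fst (F (t, g t)))" "DC_on {-\<eta>..\<eta>} (\<lambda>t. snd (F (t, g t)))"
    using DC_on_along_curve[of "{-\<eta>..\<eta>}" p q] \<eta>(2) unfolding pq(3) by auto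
  have lim: "((\<lambda>t. fst (F (t, g t)) / t) \<longlongrightarrow> c) (at_right 0)"
    "((\<lambda>t. snd (F (t, g t)) / t) \<longlongrightarrow> 0) (at_right 0)"
    using quotient_limits_along_curve[OF \<eta>(1) _ g_lim] \<eta>(2) by auto
  have at_0: "fst (F (0, g 0)) = 0" "snd (F (0, g 0)) = 0" using \<open>g 0 = 0\<close> F_zero by simp_all
  obtain \<delta> where \<delta>: "0 < \<delta>" "\<delta> < \<eta>" "expanding_from_0 (c / 2) \<delta> (\<lambda>t. fst (F (t, g t)))"
    "DCR_on {0..c / 2 * \<delta>} ((\<lambda>t. snd (F (t, g t))) \<circ> the_inv_into {0..\<delta>} (\<lambda>t. fst (F (t, g t))))"
    by (rule DC_compose_inverse_near_0[OF DC \<eta>(1) c_pos at_0 lim])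
  interpret expanding_from_0 "c / 2" \<delta> "\<lambda>t. fst (F (t, g t))" by (fact \<delta>(3))
  have "tame_curve \<delta> g"
    unfolding tame_curve_def image_graph_fun_def
  proof (intro conjI ballI)
    show "continuous_on {0..\<delta>} g" using g_cont by (rule continuous_on_subset) simp
    show "(t, g t) \<in> cball 0 \<rho>" if "t \<in> {0..\<delta>}" for t using \<eta>(2) that \<delta>(2) by auto
    show "((\<lambda>t. snd (F (t, g t))) \<circ> Ginv) 0 = 0" using Ginv_zero \<delta>(1) \<open>g 0 = 0\<close> F_zero by simp
    show "has_onesided_dirderiv ((\<lambda>t. snd (F (t, g t))) \<circ> Ginv) 0 1 0"
      by (rule onesided_dirderiv_compose_Ginv[OF \<delta>(1) at_0(2) lim(2)])
  qed (use \<delta> in auto)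
  then show thesis by (rule that)
qed

lemma tame_extension:
  assumes "DCR_on {0..r} f" "f 0 = 0" "has_onesided_dirderiv f 0 1 0" "0 < r"
  shows "\<exists>g \<delta>. tame_curve \<delta> g \<and> (\<forall>t\<in>{0..r}. f t = g t)"
proof -
  obtain g where g: "DC_on UNIV g" "\<And>t. t \<in> {0..r} \<Longrightarrow> f t = g t"
    using assms(1) unfolding DCR_on_def by blast
  have "g 0 = 0" using g(2)[of 0] assms(2,4) by simp
  have "\<forall>\<^sub>F t in at_right 0. f t / t = g t / t"
    unfolding eventually_at_right_field using g(2) \<open>0 < r\<close> by (intro exI[of _ r]) auto
  then have "((\<lambda>t. g t / t) \<longlongrightarrow> 0) (at_right 0)"
    using onesided_dirderiv_0_quotient[OF assms(3,2)] by (rule tendsto_cong[THEN iffD1])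
  then obtain \<delta> where "tame_curve \<delta> g" using tame_curve_exists[OF g(1) \<open>g 0 = 0\<close>] by blast
  then show ?thesis using g(2) by blast
qed

lemma expanding_along_tame_cover:
  assumes "finite I" and tame: "\<And>i. i \<in> I \<Longrightarrow> tame_curve (\<delta> i) (g i)" and a: "0 \<le> a" "\<And>i. i \<in> I \<Longrightarrow> a \<le> \<delta> i"
    and h: "continuous_on {0..a} h" and cover: "\<And>t. t \<in> {0..a} \<Longrightarrow> \<exists>i\<in>I. h t = g i t"
  shows "expanding_from_0 (c / 2) a (\<lambda>t. fst (F (t, h t)))"
proof
  have tame': "expanding_from_0 (c / 2) (\<delta> i) (\<lambda>t. fst (F (t, g i t)))" "continuous_on {0..\<delta> i} (g i)"
    "\<forall>t\<in>{0..\<delta> i}. (t, g i t) \<in> cball 0 \<rho>" if "i \<in> I" for i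
    using tame[OF that] unfolding tame_curve_def by auto
  have g_cont: "continuous_on {0..a} (g i)" if "i \<in> I" for i
    by (rule continuous_on_subset[OF tame'(2)[OF that]]) (use a(2)[OF that] in auto)
  have "(t, h t) \<in> cball 0 \<rho>" if "t \<in> {0..a}" for t
    using cover[OF that] tame'(3) a(2) that by force
  moreover have "continuous_on {0..a} (\<lambda>t. (t, h t))" by (intro continuous_on_Pair continuous_on_id h)
  ultimately have "continuous_on {0..a} (\<lambda>t. F (t, h t))"
    by (intro continuous_on_compose2[OF F_continuous]) auto
  then show cont: "continuous_on {0..a} (\<lambda>t. fst (F (t, h t)))" by (rule continuous_on_fst)
  show "0 < c / 2" using c_pos by simp
  obtain i where "i \<in> I" "h 0 = g i 0" using cover[of 0] a(1) by auto
  then show "fst (F (0, h 0)) = 0" using expanding_from_0.zero[OF tame'(1)] by simp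
  show "c / 2 \<le> slope (\<lambda>t. fst (F (t, h t))) s t" if "0 \<le> s" "s < t" "t \<le> a" for s t
  proof (rule slope_ge_along_covered_curve[where \<Phi> = "\<lambda>p. fst (F p)", OF \<open>finite I\<close> h g_cont cover cont _ that])
    fix i s' t' assume "i \<in> I" "0 \<le> s'" "s' < t'" "t' \<le> a"
    then show "c / 2 \<le> slope (\<lambda>t. fst (F (t, g i t))) s' t'"
      using expanding_from_0.slope_ge[OF tame'(1)[OF \<open>i \<in> I\<close>], of s' t'] a(2)[OF \<open>i \<in> I\<close>] by simp
  qed
qed

lemma tame_cover_subset_cball:
  assumes "\<And>i. i \<in> I \<Longrightarrow> tame_curve (\<delta> i) (g i)" "\<And>i. i \<in> I \<Longrightarrow> a \<le> \<delta> i"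
  shows "(\<Union>i\<in>I. graph_on {0..a} (g i)) \<subseteq> cball 0 \<rho>"
  using assms unfolding tame_curve_def by (fastforce simp: mem_graph_on_iff)

lemma image_tame_cover:
  assumes tame: "\<And>i. i \<in> I \<Longrightarrow> tame_curve (\<delta> i) (g i)" and a: "\<And>i. i \<in> I \<Longrightarrow> a \<le> \<delta> i"
    and T_cover: "T \<subseteq> (\<Union>i\<in>I. graph_on {0..a} (g i))" and b: "0 \<le> b" "b \<le> c / 2 * a"
  shows "F ` T \<inter> {p. fst p \<le> b} \<subseteq> (\<Union>i\<in>I. graph_on {0..b} (image_graph_fun F (\<delta> i) (g i)))"
proof -
  have "F ` T \<inter> {p. fst p \<le> b} \<subseteq> (\<Union>i\<in>I. F ` graph_on {0..\<delta> i} (g i) \<inter> {p. fst p \<le> b})"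
    using T_cover a by (fastforce simp: graph_on_def)
  also have "\<dots> = (\<Union>i\<in>I. graph_on {0..b} (image_graph_fun F (\<delta> i) (g i)))"
  proof (rule SUP_cong[OF refl])
    fix i assume "i \<in> I"
    show "F ` graph_on {0..\<delta> i} (g i) \<inter> {p. fst p \<le> b} = graph_on {0..b} (image_graph_fun F (\<delta> i) (g i))"
    proof (rule graph_image_graph_fun[OF _ b(1)])
      show "expanding_from_0 (c / 2) (\<delta> i) (\<lambda>t. fst (F (t, g i t)))"
        using tame[OF \<open>i \<in> I\<close>] unfolding tame_curve_def by blast
      have "c / 2 * a \<le> c / 2 * \<delta> i" using a[OF \<open>i \<in> I\<close>] c_pos by simp
      then show "b \<le> c / 2 * \<delta> i" using b(2) by linarith
    qed
  qed
  finally show ?thesis .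
qed

lemma image_graph_fun_along_tame_cover:
  assumes "finite I" and tame: "\<And>i. i \<in> I \<Longrightarrow> tame_curve (\<delta> i) (g i)"
    and a: "0 \<le> a" "\<And>i. i \<in> I \<Longrightarrow> a \<le> \<delta> i"
    and h: "continuous_on {0..a} h" and cover: "graph_on {0..a} h \<subseteq> (\<Union>i\<in>I. graph_on {0..a} (g i))"
  shows "expanding_from_0 (c / 2) a (\<lambda>t. fst (F (t, h t)))"
    and "continuous_on {0..c / 2 * a} (image_graph_fun F a h)"
proof -
  have on_graph: "(t, h t) \<in> (\<Union>i\<in>I. graph_on {0..a} (g i))" if "t \<in> {0..a}" for t
  proof -
    have "(t, h t) \<in> graph_on {0..a} h" using that by (simp add: mem_graph_on_iff)
    then show ?thesis using cover by blast
  qed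
  have h_cover: "\<exists>i\<in>I. h t = g i t" if t: "t \<in> {0..a}" for t
  proof -
    obtain i where "i \<in> I" "(t, h t) \<in> graph_on {0..a} (g i)" using on_graph[OF t] by blast
    then show ?thesis by (auto simp: mem_graph_on_iff)
  qed
  show expanding: "expanding_from_0 (c / 2) a (\<lambda>t. fst (F (t, h t)))"
    using expanding_along_tame_cover[OF \<open>finite I\<close> tame a h h_cover] .
  have "(\<lambda>t. (t, h t)) ` {0..a} \<subseteq> cball 0 \<rho>"
  proof (rule image_subsetI)
    fix t assume "t \<in> {0..a}"
    show "(t, h t) \<in> cball 0 \<rho>"
      by (rule subsetD[OF tame_cover_subset_cball[OF tame a(2)] on_graph[OF \<open>t \<in> {0..a}\<close>]])
  qed
  then have "continuous_on {0..a} (\<lambda>t. F (t, h t))"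
    by (rule continuous_on_compose2[OF F_continuous continuous_on_Pair[OF continuous_on_id h]])
  then have "continuous_on {0..a} (\<lambda>t. snd (F (t, h t)))" by (rule continuous_on_snd)
  then show "continuous_on {0..c / 2 * a} (image_graph_fun F a h)"
    by (rule continuous_on_image_graph_fun[OF expanding])
qed

lemma s_set_image_of_tame_cover:
  assumes "finite I" and tame: "\<And>i. i \<in> I \<Longrightarrow> tame_curve (\<delta> i) (g i)"
    and a: "0 < a" "\<And>i. i \<in> I \<Longrightarrow> a \<le> \<delta> i"
    and T_cover: "T \<subseteq> (\<Union>i\<in>I. graph_on {0..a} (g i))"
    and T_graphs: "T = (\<Union>h\<in>H. graph_on {0..a} h)" "\<And>h. h \<in> H \<Longrightarrow> continuous_on {0..a} h"
    and "closed T" "(0, 0) \<in> T"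
  shows "s_set (F ` T \<inter> {p. fst p \<le> c / 2 * a})"
proof -
  define b where "b = c / 2 * a"
  have b: "0 < b" using c_pos a(1) unfolding b_def by simp
  have T_ball: "T \<subseteq> cball 0 \<rho>" using T_cover tame_cover_subset_cball[OF tame a(2)] by (rule order_trans)
  have "compact T"
    using \<open>closed T\<close> bounded_subset[OF bounded_cball T_ball] by (simp add: compact_eq_bounded_closed)
  then have "compact (F ` T)"
    by (rule compact_continuous_image[OF continuous_on_subset[OF F_continuous T_ball]])
  then have closed: "closed (F ` T \<inter> {p. fst p \<le> b})"
    by (intro closed_Int compact_imp_closed closed_Collect_le continuous_intros)
  have "F (0, 0) \<in> F ` T" using \<open>(0, 0) \<in> T\<close> by (rule imageI)
  then have "(0, 0) \<in> F ` T \<inter> {p. fst p \<le> b}" using F_zero b by simp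
  then have nonempty: "F ` T \<inter> {p. fst p \<le> b} \<noteq> {}" by blast
  have DCR_parts: "DCR_on {0..b} (image_graph_fun F (\<delta> i) (g i))"
    "image_graph_fun F (\<delta> i) (g i) 0 = 0" "has_onesided_dirderiv (image_graph_fun F (\<delta> i) (g i)) 0 1 0"
    if "i \<in> I" for i
  proof -
    have "c / 2 * a \<le> c / 2 * \<delta> i" using a(2)[OF that] c_pos by simp
    then have sub: "{0..b} \<subseteq> {0..c / 2 * \<delta> i}" unfolding b_def by auto
    show "DCR_on {0..b} (image_graph_fun F (\<delta> i) (g i))"
    proof (rule DCR_on_subset)
      show "DCR_on {0..c / 2 * \<delta> i} (image_graph_fun F (\<delta> i) (g i))"
        using tame[OF that] unfolding tame_curve_def by blast
    qed (use sub b in auto)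
    show "image_graph_fun F (\<delta> i) (g i) 0 = 0" "has_onesided_dirderiv (image_graph_fun F (\<delta> i) (g i)) 0 1 0"
      using tame[OF that] unfolding tame_curve_def by blast+
  qed
  have H_cover: "graph_on {0..a} h \<subseteq> (\<Union>i\<in>I. graph_on {0..a} (g i))" if "h \<in> H" for h
  proof -
    have "graph_on {0..a} h \<subseteq> T" unfolding T_graphs(1) using that by blast
    then show ?thesis using T_cover by (rule order_trans)
  qed
  have H_parts: "expanding_from_0 (c / 2) a (\<lambda>t. fst (F (t, h t)))"
    "continuous_on {0..c / 2 * a} (image_graph_fun F a h)" if "h \<in> H" for h
    using image_graph_fun_along_tame_cover[OF \<open>finite I\<close> tame less_imp_le[OF a(1)] a(2)
        T_graphs(2)[OF that] H_cover[OF that]] by blast+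
  have H_graphs: "F ` T \<inter> {p. fst p \<le> b} = (\<Union>h\<in>H. graph_on {0..b} (image_graph_fun F a h))"
    unfolding T_graphs(1) b_def
    by (rule image_graphs_eq_graphs[OF H_parts(1)]) (use b in \<open>auto simp: b_def\<close>)
  show ?thesis
    unfolding s_set_def b_def[symmetric]
  proof (intro conjI exI[of _ b] nonempty closed b)
    show "\<exists>Fs. finite Fs \<and> (\<forall>f\<in>Fs. DCR_on {0..b} f \<and> f 0 = 0 \<and> has_onesided_dirderiv f 0 1 0) \<and>
        F ` T \<inter> {p. fst p \<le> b} \<subseteq> (\<Union>f\<in>Fs. graph_on {0..b} f)"
      using \<open>finite I\<close> DCR_parts image_tame_cover[OF tame a(2) T_cover less_imp_le[OF b]]
      unfolding b_def by (intro exI[of _ "(\<lambda>i. image_graph_fun F (\<delta> i) (g i)) ` I"]) auto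
    show "\<exists>H. (\<forall>h\<in>H. continuous_on {0..b} h) \<and> F ` T \<inter> {p. fst p \<le> b} = (\<Union>h\<in>H. graph_on {0..b} h)"
      using H_parts(2) H_graphs unfolding b_def
      by (intro exI[of _ "(\<lambda>h. image_graph_fun F a h) ` H"]) auto
  qed
qed

lemma s_set_image:
  assumes "s_set S"
  shows "\<exists>a>0. \<exists>b>0. s_set (F ` (S \<inter> {p. fst p \<le> a}) \<inter> {p. fst p \<le> b})"
proof -
  obtain r Fs H where S: "closed S" "0 < r" "finite Fs"
    and Fs: "\<And>f. f \<in> Fs \<Longrightarrow> DCR_on {0..r} f \<and> f 0 = 0 \<and> has_onesided_dirderiv f 0 1 0"
    and S_Fs: "S \<subseteq> (\<Union>f\<in>Fs. graph_on {0..r} f)"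
    and H: "\<And>h. h \<in> H \<Longrightarrow> continuous_on {0..r} h" and S_H: "S = (\<Union>h\<in>H. graph_on {0..r} h)"
    using assms unfolding s_set_def by blast
  have "\<forall>f\<in>Fs. \<exists>g \<delta>. tame_curve \<delta> g \<and> (\<forall>t\<in>{0..r}. f t = g t)"
  proof
    fix f assume "f \<in> Fs"
    then have "DCR_on {0..r} f" "f 0 = 0" "has_onesided_dirderiv f 0 1 0" using Fs by auto
    then show "\<exists>g \<delta>. tame_curve \<delta> g \<and> (\<forall>t\<in>{0..r}. f t = g t)"
      using \<open>0 < r\<close> by (rule tame_extension)
  qed
  from bchoice[OF this] obtain g where "\<forall>f\<in>Fs. \<exists>\<delta>. tame_curve \<delta> (g f) \<and> (\<forall>t\<in>{0..r}. f t = g f t)" ..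
  from bchoice[OF this] obtain \<delta> where "\<forall>f\<in>Fs. tame_curve (\<delta> f) (g f) \<and> (\<forall>t\<in>{0..r}. f t = g f t)" ..
  then have tame: "\<And>f. f \<in> Fs \<Longrightarrow> tame_curve (\<delta> f) (g f)"
    and agree: "\<And>f t. f \<in> Fs \<Longrightarrow> t \<in> {0..r} \<Longrightarrow> f t = g f t"
    by auto
  define a where "a = Min (insert r (\<delta> ` Fs))"
  have "0 < \<delta> f" if "f \<in> Fs" for f using tame[OF that] unfolding tame_curve_def by (rule conjunct1)
  then have a: "0 < a" "a \<le> r" "\<And>f. f \<in> Fs \<Longrightarrow> a \<le> \<delta> f"
    unfolding a_def using \<open>finite Fs\<close> \<open>0 < r\<close> by auto
  define T where "T = S \<inter> {p. fst p \<le> a}"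
  have T_cover: "T \<subseteq> (\<Union>f\<in>Fs. graph_on {0..a} (g f))"
  proof
    fix p assume "p \<in> T"
    then obtain f where "f \<in> Fs" "p \<in> graph_on {0..r} f" "fst p \<le> a"
      using S_Fs unfolding T_def by blast
    then show "p \<in> (\<Union>f\<in>Fs. graph_on {0..a} (g f))"
      using agree[of f "fst p"] by (auto simp: mem_graph_on_iff)
  qed
  have T_graphs: "T = (\<Union>h\<in>H. graph_on {0..a} h)"
    unfolding T_def S_H using a(2) by (auto simp: mem_graph_on_iff)
  have H_a: "continuous_on {0..a} h" if "h \<in> H" for h
    by (rule continuous_on_subset[OF H[OF that]]) (use a(2) in auto)
  have "closed T" unfolding T_def using S(1) by (intro closed_Int closed_Collect_le continuous_intros)
  have "(0, 0) \<in> T" unfolding T_def using s_set_origin[OF assms] a(1) by simp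
  have "s_set (F ` T \<inter> {p. fst p \<le> c / 2 * a})"
    using s_set_image_of_tame_cover[OF \<open>finite Fs\<close> tame a(1,3) T_cover T_graphs H_a
        \<open>closed T\<close> \<open>(0, 0) \<in> T\<close>] .
  moreover have "0 < c / 2 * a" using a(1) c_pos by simp
  ultimately show ?thesis using a(1) unfolding T_def by blast
qed

end

lemma DC_map_near_0_exists:
  assumes "(0, 0) \<in> G" "locally_DC_map G F" "0 < c" "F (0, 0) = (0, 0)"
    and "has_onesided_dirderiv F (0, 0) (1, 0) (c, 0)"
  obtains \<rho> L u1 v1 u2 v2 where "DC_map_near_0 F c \<rho> L u1 v1 u2 v2"
proof -
  obtain U where U: "open U" "(0, 0) \<in> U" "DC_map_on U F"
    using assms(1,2) unfolding locally_DC_map_def by blast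
  obtain u1 v1 where uv1: "convex_on U u1" "convex_on U v1" "\<And>z. z \<in> U \<Longrightarrow> fst (F z) = u1 z - v1 z"
    using U(3) unfolding DC_map_on_def DC_on_def by blast
  obtain u2 v2 where uv2: "convex_on U u2" "convex_on U v2" "\<And>z. z \<in> U \<Longrightarrow> snd (F z) = u2 z - v2 z"
    using U(3) unfolding DC_map_on_def DC_on_def by blast
  have convex: "convex_on U u" if "u \<in> {u1, v1, u2, v2}" for u
    using that uv1 uv2 by auto
  have F_eq: "F z = (u1 z - v1 z, u2 z - v2 z)" if "z \<in> U" for z
    using uv1(3)[OF that] uv2(3)[OF that] by (simp add: prod_eq_iff)
  obtain e where "0 < e" "cball 0 e \<subseteq> U"
    using U(1,2) open_contains_cball by (metis zero_prod_def)
  define \<rho> where "\<rho> = e / 2"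
  have \<rho>: "0 < \<rho>" "cball 0 (2 * \<rho>) \<subseteq> U" "cball 0 \<rho> \<subseteq> U"
    using \<open>0 < e\<close> \<open>cball 0 e \<subseteq> U\<close> unfolding \<rho>_def by (auto simp: subset_iff)
  have "\<exists>L. \<forall>t. L-lipschitz_on {y. (t, y) \<in> cball 0 \<rho>} (\<lambda>y. u (t, y))" if "u \<in> {u1, v1, u2, v2}" for u
    using convex_on_vertically_lipschitz[OF U(1) convex[OF that] \<rho>(1,2)] .
  then obtain Lu where Lu: "\<And>u t. u \<in> {u1, v1, u2, v2} \<Longrightarrow> (Lu u)-lipschitz_on {y. (t, y) \<in> cball 0 \<rho>} (\<lambda>y. u (t, y))"
    using bchoice[of "{u1, v1, u2, v2}"] by metis
  define L where "L = Lu u1 + Lu v1 + Lu u2 + Lu v2"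
  have "0 \<le> Lu u" if "u \<in> {u1, v1, u2, v2}" for u using lipschitz_on_nonneg[OF Lu[OF that]] .
  then have "Lu u \<le> L" if "u \<in> {u1, v1, u2, v2}" for u
    using that unfolding L_def by (smt (verit) insert_iff singletonD)
  then have lipschitz: "L-lipschitz_on {y. (t, y) \<in> cball 0 \<rho>} (\<lambda>y. u (t, y))" if "u \<in> {u1, v1, u2, v2}" for u t
    using lipschitz_on_le[OF Lu[OF that]] that by blast
  have "continuous_on U (\<lambda>z. (u1 z - v1 z, u2 z - v2 z))"
    using uv1 uv2 U(1) by (intro continuous_intros convex_on_continuous) auto
  then have "continuous_on (cball 0 \<rho>) F"
    by (rule continuous_on_subset[THEN continuous_on_eq, OF _ \<rho>(3)]) (use F_eq \<rho>(3) in auto)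
  then have "DC_map_near_0 F c \<rho> L u1 v1 u2 v2"
    using assms(3-5) \<rho>(1,3) convex F_eq lipschitz
    by unfold_locales (auto intro: convex_on_subset)
  then show thesis by (rule that)
qed

theorem lemma5p10:
  fixes G S :: "(real \<times> real) set"
    and F :: "real \<times> real \<Rightarrow> real \<times> real"
    and c :: real
  assumes "open G" and "(0, 0) \<in> G" and "c > 0"
    and "locally_DC_map G F"
    and "F (0, 0) = (0, 0)"
    and "has_onesided_dirderiv F (0, 0) (1, 0) (c, 0)"
    and "S \<subseteq> G" and "s_set S"
  shows "\<exists>a>0. \<exists>b>0.
           s_set (F ` (S \<inter> {p. fst p \<le> a}) \<inter> {p. fst p \<le> b})"
proof -
  obtain \<rho> L u1 v1 u2 v2 where "DC_map_near_0 F c \<rho> L u1 v1 u2 v2"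
    using DC_map_near_0_exists[OF assms(2,4,3,5,6)] .
  then show ?thesis using DC_map_near_0.s_set_image[OF _ \<open>s_set S\<close>] by blast
qed

end
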